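(* The set $\mathcal M=\{u\in\mathcal N: J'(u)u_1=J'(u)u_2=0,\ u_1\ne0,\ u_2\ne0\}$ is not empty.
   Context: $\Omega_1,\Omega_2\subset\mathbb R^3$ are disjoint bounded open sets with $\mathrm{dist}(\Omega_1,\Omega_2)>0$, $\Omega=\Omega_1\cup\Omega_2$. $M:[0,\infty)\to[0,\infty)$ is $C^1$ with $(M_1)$ $M$ increasing, $M(0)=m_0>0$; $(M_2)$ $t\mapsto M(t)/t$ decreasing on $(0,\infty)$; $\widehat M(t)=\int_0^tM$. $f:\mathbb R\to\mathbb R$ is continuous, $F(s)=\int_0^sf$, with $(f_1)$ $f(s)/s\to0$ as $s\to0$; $(f_2)$ $f(s)/s^5\to0$ as $|s|\to\infty$; $(f_3)$ there is $\theta>4$ with $0<\theta F(s)\le sf(s)$ for $s\ne0$; $(f_4)$ $f(s)/s^3$ increasing on $(0,\infty)$, decreasing on $(-\infty,0)$. On $H^1_0(\Omega)$ with $\|u\|^2=\int_\Omega(|\nabla u|^2+u^2)$, $J(u)=\frac12\widehat M(\|u\|^2)-\int_\Omega F(u)$; $\mathcal N=\{u\in H^1_0(\Omega)\setminus\{0\}:J'(u)u=0\}$; $u_j=u|_{\Omega_j}$ extended by zero, $j=1,2$. *)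

theory Defs
  imports "HOL-Analysis.Analysis"
begin

type_synonym R3 = "real^3"

definition cc1 :: "R3 set \<Rightarrow> (R3 \<Rightarrow> real) \<Rightarrow> (R3 \<Rightarrow> R3) \<Rightarrow> bool" where
  "cc1 U \<phi> g \<longleftrightarrow> continuous_on UNIV g
     \<and> (\<forall>x. (\<phi> has_derivative (\<lambda>h. g x \<bullet> h)) (at x))
     \<and> compact (closure {x. \<phi> x \<noteq> 0}) \<and> closure {x. \<phi> x \<noteq> 0} \<subseteq> U"

definition L2 :: "(R3 \<Rightarrow> real) \<Rightarrow> bool" where
  "L2 u \<longleftrightarrow> u \<in> borel_measurable lebesgue \<and> integrable lebesgue (\<lambda>x. (u x)\<^sup>2)"

definition L2v :: "(R3 \<Rightarrow> R3) \<Rightarrow> bool" where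
  "L2v G \<longleftrightarrow> G \<in> borel_measurable lebesgue \<and> integrable lebesgue (\<lambda>x. (norm (G x))\<^sup>2)"

definition is_weak_grad :: "(R3 \<Rightarrow> real) \<Rightarrow> (R3 \<Rightarrow> R3) \<Rightarrow> bool" where
  "is_weak_grad u G \<longleftrightarrow> L2v G \<and>
     (\<forall>\<phi> g. cc1 UNIV \<phi> g \<longrightarrow>
        (\<forall>i. (\<integral>x. u x * (g x $ i) \<partial>lebesgue) = - (\<integral>x. (G x $ i) * \<phi> x \<partial>lebesgue)))"

definition wgrad :: "(R3 \<Rightarrow> real) \<Rightarrow> (R3 \<Rightarrow> R3)" where
  "wgrad u = (SOME G. is_weak_grad u G)"

text \<open>H^1_0(Omega): closure of C_c^1(Omega) in the H^1 norm (functions extended by zero to R^3).\<close>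
definition H10 :: "R3 set \<Rightarrow> (R3 \<Rightarrow> real) set" where
  "H10 \<Omega> = {u. L2 u \<and> (\<exists>G. is_weak_grad u G \<and>
      (\<exists>\<phi> g. (\<forall>n. cc1 \<Omega> (\<phi> n) (g n))
         \<and> (\<lambda>n. \<integral>x. (\<phi> n x - u x)\<^sup>2 \<partial>lebesgue) \<longlonglongrightarrow> 0
         \<and> (\<lambda>n. \<integral>x. (norm (g n x - G x))\<^sup>2 \<partial>lebesgue) \<longlonglongrightarrow> 0))}"

definition h1norm2 :: "(R3 \<Rightarrow> real) \<Rightarrow> real" where
  "h1norm2 u = (\<integral>x. (norm (wgrad u x))\<^sup>2 + (u x)\<^sup>2 \<partial>lebesgue)"

definition Jfun :: "(real \<Rightarrow> real) \<Rightarrow> (real \<Rightarrow> real) \<Rightarrow> (R3 \<Rightarrow> real) \<Rightarrow> real" where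
  "Jfun Mhat F u = Mhat (h1norm2 u) / 2 - (\<integral>x. F (u x) \<partial>lebesgue)"

text \<open>J'(u)v = 0, expressed via the (Gateaux) derivative of t \<mapsto> J(u + t v) at t = 0.\<close>
definition dJ_zero :: "(real \<Rightarrow> real) \<Rightarrow> (real \<Rightarrow> real) \<Rightarrow> (R3 \<Rightarrow> real) \<Rightarrow> (R3 \<Rightarrow> real) \<Rightarrow> bool" where
  "dJ_zero Mhat F u v \<longleftrightarrow> ((\<lambda>t. Jfun Mhat F (\<lambda>x. u x + t * v x)) has_real_derivative 0) (at 0)"

definition nonzero :: "(R3 \<Rightarrow> real) \<Rightarrow> bool" where
  "nonzero u \<longleftrightarrow> \<not> (AE x in lebesgue. u x = 0)"

definition nehari :: "R3 set \<Rightarrow> (real \<Rightarrow> real) \<Rightarrow> (real \<Rightarrow> real) \<Rightarrow> (R3 \<Rightarrow> real) set" where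
  "nehari \<Omega> Mhat F = {u \<in> H10 \<Omega>. nonzero u \<and> dJ_zero Mhat F u u}"

definition restr :: "R3 set \<Rightarrow> (R3 \<Rightarrow> real) \<Rightarrow> (R3 \<Rightarrow> real)" where
  "restr A u = (\<lambda>x. indicator A x * u x)"

definition Mset :: "R3 set \<Rightarrow> R3 set \<Rightarrow> (real \<Rightarrow> real) \<Rightarrow> (real \<Rightarrow> real) \<Rightarrow> (R3 \<Rightarrow> real) set" where
  "Mset \<Omega>1 \<Omega>2 Mhat F = {u \<in> nehari (\<Omega>1 \<union> \<Omega>2) Mhat F.
      dJ_zero Mhat F u (restr \<Omega>1 u) \<and> dJ_zero Mhat F u (restr \<Omega>2 u)
      \<and> nonzero (restr \<Omega>1 u) \<and> nonzero (restr \<Omega>2 u)}"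

end

theory Submission
  imports Defs
begin

text \<open>
  Pick balls \<open>B(c\<^sub>j, e) \<subseteq> \<Omega>\<^sub>j\<close> and the \<open>C\<^sup>1\<close> bumps \<open>\<phi>\<^sub>j(x) = ((e\<^sup>2 - |x - c\<^sub>j|\<^sup>2)\<^sup>+)\<^sup>2\<close>.
  Their supports are disjoint and they are translates of each other, so on the plane
  \<open>u = \<alpha>\<phi>\<^sub>1 + \<beta>\<phi>\<^sub>2\<close> everything is explicit: \<open>\<parallel>u\<parallel>\<^sup>2 = (\<alpha>\<^sup>2 + \<beta>\<^sup>2) A\<close> and
  \<open>\<integral>F(u) = \<Phi>(\<alpha>) + \<Phi>(\<beta>)\<close>, where \<open>A = \<parallel>\<phi>\<^sub>1\<parallel>\<^sup>2\<close> and \<open>\<Phi>(r) = \<integral>F(r\<phi>\<^sub>1)\<close>.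
  At \<open>u = s\<phi>\<^sub>1 + s\<phi>\<^sub>2\<close> this gives \<open>J'(u)(\<gamma>\<phi>\<^sub>1 + \<delta>\<phi>\<^sub>2) = (\<gamma> + \<delta>) \<psi>'(s)\<close> with
  \<open>\<psi>(s) = Mhat(2As\<^sup>2)/4 - \<Phi>(s)\<close>.  By \<open>(f\<^sub>1)\<close> and \<open>Mhat(t) \<ge> m\<^sub>0 t\<close> the function \<open>\<psi>\<close> is positive
  for small \<open>s\<close>; by \<open>(f\<^sub>3)\<close> \<open>F\<close> grows faster than \<open>s\<^sup>4\<close> while \<open>(M\<^sub>2)\<close> makes \<open>Mhat\<close> at most quadratic,
  so \<open>\<psi>\<close> is negative for large \<open>s\<close>.  An interior maximum of \<open>\<psi>\<close> is a critical point \<open>s > 0\<close>,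
  and then \<open>s\<phi>\<^sub>1 + s\<phi>\<^sub>2 \<in> \<M>\<close> because its restrictions are \<open>s\<phi>\<^sub>1\<close> and \<open>s\<phi>\<^sub>2\<close>.

  Since the norm is defined through an arbitrarily chosen weak gradient, evaluating it on
  \<open>C\<^sup>1\<close> test functions needs uniqueness of weak gradients, that is, the fundamental lemma of
  the calculus of variations, which follows by approximating indicators of boxes by \<open>C\<^sup>1\<close> cutoffs.
\<close>

definition pos_sq :: "real \<Rightarrow> real" where "pos_sq y = (max 0 y)\<^sup>2"

lemma pos_sq_deriv: "(pos_sq has_real_derivative 2 * max 0 y) (at y)"
proof (cases y "0::real" rule: linorder_cases)
  case equal
  have "((\<lambda>z. (pos_sq z - pos_sq 0) / (z - 0)) \<longlongrightarrow> 0) (at 0)"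
  proof (rule tendsto_sandwich[where f="\<lambda>z. - \<bar>z\<bar>" and h="\<lambda>z. \<bar>z\<bar>"])
    show "\<forall>\<^sub>F z in at 0. - \<bar>z\<bar> \<le> (pos_sq z - pos_sq 0) / (z - 0)"
      "\<forall>\<^sub>F z in at 0. (pos_sq z - pos_sq 0) / (z - 0) \<le> \<bar>z\<bar>"
      by (auto simp: pos_sq_def max_def power2_eq_square intro!: always_eventually)
  qed (auto intro!: tendsto_eq_intros)
  then show ?thesis using equal by (simp add: has_field_derivative_iff)
next
  case greater
  have "((\<lambda>z. z\<^sup>2) has_real_derivative 2 * y) (at y)"
    by (auto intro!: derivative_eq_intros)
  then show ?thesis using greater
    by (rule_tac has_field_derivative_transform_within_open[where S="{0<..}"]) (auto simp: pos_sq_def)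
next
  case less
  have "((\<lambda>z. 0) has_real_derivative 0) (at y)"
    by simp
  then show ?thesis using less
    by (rule_tac has_field_derivative_transform_within_open[where S="{..<0}"]) (auto simp: pos_sq_def)
qed

lemma continuous_on_pos_sq: "continuous_on UNIV pos_sq"
  unfolding pos_sq_def by (intro continuous_intros)

lemma pos_sq_nonneg: "pos_sq y \<ge> 0"
  by (simp add: pos_sq_def)

lemma pos_sq_pos: "y > 0 \<Longrightarrow> pos_sq y > 0"
  by (simp add: pos_sq_def)

lemma pos_sq_eq_0: "y \<le> 0 \<Longrightarrow> pos_sq y = 0"
  by (simp add: pos_sq_def)

definition smooth_step :: "real \<Rightarrow> real" where
  "smooth_step y = pos_sq y / (pos_sq y + pos_sq (1 - y))"

lemma smooth_step_denom_pos: "pos_sq y + pos_sq (1 - y) > 0"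
  by (cases "y > 0") (auto simp: add_pos_nonneg add_nonneg_pos pos_sq_pos pos_sq_nonneg)

lemma smooth_step_C1:
  obtains s' where "\<And>y. (smooth_step has_real_derivative s' y) (at y)" "continuous_on UNIV s'"
proof -
  define D where "D y = pos_sq y + pos_sq (1 - y)" for y :: real
  define D' where "D' y = 2 * max 0 y - 2 * max 0 (1 - y)" for y :: real
  have D: "(D has_real_derivative D' y) (at y)" for y
    unfolding D_def[abs_def] D'_def
    by (auto intro!: derivative_eq_intros DERIV_chain2[OF pos_sq_deriv] pos_sq_deriv)
  have "continuous_on UNIV D" "continuous_on UNIV D'"
    unfolding D_def D'_def
    by (intro continuous_intros continuous_on_compose2[OF continuous_on_pos_sq] continuous_on_pos_sq; simp)+
  moreover have "D y \<noteq> 0" for y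
    using smooth_step_denom_pos[of y] by (simp add: D_def)
  ultimately have "continuous_on UNIV (\<lambda>y. (2 * max 0 y * D y - pos_sq y * D' y) / (D y)\<^sup>2)"
    by (intro continuous_intros continuous_on_pos_sq) auto
  moreover have "(smooth_step has_real_derivative (2 * max 0 y * D y - pos_sq y * D' y) / (D y)\<^sup>2) (at y)" for y
    using DERIV_divide[OF pos_sq_deriv D, of y] smooth_step_denom_pos[of y]
    by (simp add: smooth_step_def[abs_def] D_def[symmetric] power2_eq_square)
  ultimately show ?thesis
    by (intro that[of "\<lambda>y. (2 * max 0 y * D y - pos_sq y * D' y) / (D y)\<^sup>2"])
qed

lemma smooth_step_eq_0: "y \<le> 0 \<Longrightarrow> smooth_step y = 0"
  by (simp add: smooth_step_def pos_sq_eq_0)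

lemma smooth_step_eq_1: "y \<ge> 1 \<Longrightarrow> smooth_step y = 1"
  using smooth_step_denom_pos[of y] by (simp add: smooth_step_def pos_sq_eq_0)

lemma smooth_step_bounds: "0 \<le> smooth_step y" "smooth_step y \<le> 1"
  using smooth_step_denom_pos[of y] pos_sq_nonneg[of y] pos_sq_nonneg[of "1 - y"]
  by (auto simp: smooth_step_def)

definition c1_grad :: "('a::euclidean_space \<Rightarrow> real) \<Rightarrow> ('a \<Rightarrow> 'a) \<Rightarrow> bool" where
  "c1_grad \<phi> g \<longleftrightarrow> continuous_on UNIV g \<and> (\<forall>x. (\<phi> has_derivative (\<lambda>h. g x \<bullet> h)) (at x))"

lemma c1_grad_imp_continuous: "c1_grad \<phi> g \<Longrightarrow> continuous_on UNIV \<phi>"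
  unfolding c1_grad_def
  by (intro continuous_at_imp_continuous_on ballI) (auto intro: has_derivative_continuous)

lemma c1_grad_imp_continuous_grad: "c1_grad \<phi> g \<Longrightarrow> continuous_on UNIV g"
  by (simp add: c1_grad_def)

lemma c1_grad_const: "c1_grad (\<lambda>x. c) (\<lambda>x. 0)"
  by (auto simp: c1_grad_def intro!: derivative_eq_intros)

lemma c1_grad_affine: "c1_grad (\<lambda>x. c * (v \<bullet> x) + d) (\<lambda>x. c *\<^sub>R v)"
  by (auto simp: c1_grad_def intro!: derivative_eq_intros)

lemma c1_grad_norm_diff_sq: "c1_grad (\<lambda>x. (norm (x - c))\<^sup>2) (\<lambda>x. 2 *\<^sub>R (x - c))"
  by (auto simp: c1_grad_def power2_norm_eq_inner inner_commute algebra_simps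
      intro!: derivative_eq_intros continuous_intros)

lemma c1_grad_add: "c1_grad \<phi> g \<Longrightarrow> c1_grad \<psi> k \<Longrightarrow> c1_grad (\<lambda>x. \<phi> x + \<psi> x) (\<lambda>x. g x + k x)"
  by (auto simp: c1_grad_def inner_add_left intro!: derivative_eq_intros continuous_intros)

lemma c1_grad_scale: "c1_grad \<phi> g \<Longrightarrow> c1_grad (\<lambda>x. c * \<phi> x) (\<lambda>x. c *\<^sub>R g x)"
  by (auto simp: c1_grad_def intro!: derivative_eq_intros continuous_intros)

lemma c1_grad_mult:
  assumes "c1_grad \<phi> g" "c1_grad \<psi> k"
  shows "c1_grad (\<lambda>x. \<phi> x * \<psi> x) (\<lambda>x. \<phi> x *\<^sub>R k x + \<psi> x *\<^sub>R g x)"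
  using assms c1_grad_imp_continuous[OF assms(1)] c1_grad_imp_continuous[OF assms(2)]
  unfolding c1_grad_def
  by (auto simp: inner_add_left algebra_simps intro!: derivative_eq_intros continuous_intros)

lemma c1_grad_prod:
  assumes "finite I" "\<And>i. i \<in> I \<Longrightarrow> c1_grad (\<phi> i) (g i)"
  shows "\<exists>G. c1_grad (\<lambda>x. \<Prod>i\<in>I. \<phi> i x) G"
  using assms
proof (induction I rule: finite_induct)
  case empty
  then show ?case using c1_grad_const[of 1] by auto
next
  case (insert j I)
  then obtain G where "c1_grad (\<lambda>x. \<Prod>i\<in>I. \<phi> i x) G" by auto
  then show ?case
    using insert c1_grad_mult[of "\<phi> j" "g j"] by auto
qed

lemma c1_grad_compose:
  assumes s: "\<And>y. (s has_real_derivative s' y) (at y)" and s': "continuous_on UNIV s'"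
    and \<phi>: "c1_grad \<phi> g"
  shows "c1_grad (\<lambda>x. s (\<phi> x)) (\<lambda>x. s' (\<phi> x) *\<^sub>R g x)"
  unfolding c1_grad_def
proof
  show "continuous_on UNIV (\<lambda>x. s' (\<phi> x) *\<^sub>R g x)"
    using \<phi> c1_grad_imp_continuous[OF \<phi>] unfolding c1_grad_def
    by (intro continuous_intros continuous_on_compose2[OF s']) auto
  show "\<forall>x. ((\<lambda>x. s (\<phi> x)) has_derivative (\<lambda>h. (s' (\<phi> x) *\<^sub>R g x) \<bullet> h)) (at x)"
  proof
    fix x
    have "(\<phi> has_derivative (\<lambda>h. g x \<bullet> h)) (at x)" using \<phi> by (simp add: c1_grad_def)
    moreover have "(s has_derivative (\<lambda>h. s' (\<phi> x) * h)) (at (\<phi> x))"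
      using s[of "\<phi> x"] by (simp add: has_field_derivative_def)
    ultimately show "((\<lambda>x. s (\<phi> x)) has_derivative (\<lambda>h. (s' (\<phi> x) *\<^sub>R g x) \<bullet> h)) (at x)"
      using diff_chain_at by (fastforce simp: comp_def)
  qed
qed

lemma has_real_derivative_c1_grad_line:
  assumes "c1_grad \<phi> g"
  shows "((\<lambda>r. \<phi> (x + r *\<^sub>R v)) has_real_derivative g (x + r *\<^sub>R v) \<bullet> v) (at r)"
proof -
  have "((\<lambda>r. x + r *\<^sub>R v) has_derivative (\<lambda>t. t *\<^sub>R v)) (at r)"
    by (auto intro!: derivative_eq_intros)
  moreover have "(\<phi> has_derivative (\<lambda>h. g (x + r *\<^sub>R v) \<bullet> h)) (at (x + r *\<^sub>R v))"
    using assms by (simp add: c1_grad_def)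
  ultimately have "((\<lambda>r. \<phi> (x + r *\<^sub>R v)) has_derivative (\<lambda>t. g (x + r *\<^sub>R v) \<bullet> (t *\<^sub>R v))) (at r)"
    by (rule diff_chain_at[unfolded comp_def])
  then show ?thesis
    by (simp add: has_field_derivative_def mult_commute_abs)
qed

lemma integrable_lebesgue_compact_support:
  fixes \<phi> :: "'a::euclidean_space \<Rightarrow> real"
  assumes "continuous_on UNIV \<phi>" "compact K" "\<And>x. x \<notin> K \<Longrightarrow> \<phi> x = 0"
  shows "integrable lebesgue \<phi>"
proof -
  have "\<phi> = (\<lambda>x. indicator K x *\<^sub>R \<phi> x)"
    using assms(3) by (auto simp: indicator_def fun_eq_iff)
  moreover have "integrable lborel (\<lambda>x. indicator K x *\<^sub>R \<phi> x)"
    using assms(2) by (rule borel_integrable_compact) (rule continuous_on_subset[OF assms(1)], simp)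
  ultimately show ?thesis
    using assms(1) by (simp add: integrable_completion borel_measurable_continuous_onI)
qed

lemma integrable_indicator_compact:
  fixes K :: "'a::euclidean_space set"
  assumes "compact K"
  shows "integrable lebesgue (indicator K :: 'a \<Rightarrow> real)"
proof -
  have "K \<in> sets lborel" using assms by (simp add: compact_imp_closed borel_closed)
  moreover have "emeasure lborel K < \<infinity>"
    using assms by (intro emeasure_bounded_finite compact_imp_bounded)
  ultimately show ?thesis by (simp add: integrable_completion)
qed

lemma integrable_mult_compact_support:
  fixes h k :: "'a::euclidean_space \<Rightarrow> real"
  assumes h: "h \<in> borel_measurable lebesgue" "integrable lebesgue (\<lambda>x. (h x)\<^sup>2)"
    and k: "k \<in> borel_measurable lebesgue" "\<And>x. \<bar>k x\<bar> \<le> B * indicator K x"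
    and K: "compact K"
  shows "integrable lebesgue (\<lambda>x. h x * k x)"
proof (rule Bochner_Integration.integrable_bound)
  show "integrable lebesgue (\<lambda>x. max B 0 * ((h x)\<^sup>2 + indicator K x))"
    using h(2) integrable_indicator_compact[OF K] by auto
  show "(\<lambda>x. h x * k x) \<in> borel_measurable lebesgue"
    using h(1) k(1) by (rule borel_measurable_times)
  show "AE x in lebesgue. norm (h x * k x) \<le> norm (max B 0 * ((h x)\<^sup>2 + indicator K x))"
  proof (rule AE_I2)
    fix x
    \<comment> \<open>\<open>|h| \<le> h\<^sup>2 + 1\<close> absorbs the local \<open>L\<^sup>1\<close> norm of \<open>h\<close> into its \<open>L\<^sup>2\<close> norm\<close>
    have h_le: "\<bar>h x\<bar> \<le> (h x)\<^sup>2 + 1"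
    proof (cases "\<bar>h x\<bar> \<le> 1")
      case False
      then have "\<bar>h x\<bar> * 1 \<le> \<bar>h x\<bar> * \<bar>h x\<bar>" by (intro mult_left_mono) auto
      then show ?thesis by (simp add: power2_eq_square abs_mult_self_eq)
    qed (use zero_le_power2[of "h x"] in linarith)
    show "norm (h x * k x) \<le> norm (max B 0 * ((h x)\<^sup>2 + indicator K x))"
    proof (cases "x \<in> K")
      case True
      have "\<bar>h x * k x\<bar> \<le> \<bar>h x\<bar> * max B 0"
        using k(2)[of x] True by (simp add: abs_mult mult_left_mono)
      also have "\<dots> \<le> ((h x)\<^sup>2 + 1) * max B 0"
        using h_le by (simp add: mult_right_mono)
      finally show ?thesis using True by (simp add: mult.commute)
    next
      case False
      then show ?thesis using k(2)[of x] by simp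
    qed
  qed
qed

lemma integral_lebesgue_translate:
  fixes f :: "'a::euclidean_space \<Rightarrow> real"
  assumes f: "f \<in> borel_measurable borel"
  shows "(\<integral>x. f (x + d) \<partial>lebesgue) = (\<integral>x. f x \<partial>lebesgue)"
proof -
  have f': "(\<lambda>x. f (x + d)) \<in> borel_measurable borel" using f by measurable
  have "(\<integral>x. f x \<partial>lborel) = (\<integral>x. f x \<partial>distr lborel borel ((+) d))"
    by (simp add: lborel_distr_plus)
  also have "\<dots> = (\<integral>x. f (x + d) \<partial>lborel)"
    using f by (simp add: integral_distr add.commute)
  finally show ?thesis
    using f f' by (simp add: integral_completion)
qed

lemma integral_lebesgue_ge_on_set:
  fixes g :: "'a::euclidean_space \<Rightarrow> real"
  assumes "integrable lebesgue g" "S \<in> lmeasurable"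
    and "\<And>x. g x \<ge> 0" "\<And>x. x \<in> S \<Longrightarrow> g x \<ge> b" "b \<ge> 0"
  shows "b * measure lebesgue S \<le> (\<integral>x. g x \<partial>lebesgue)"
proof -
  have "(\<integral>x. b * indicator S x \<partial>lebesgue) \<le> (\<integral>x. g x \<partial>lebesgue)"
    using assms by (intro integral_mono) (auto simp: fmeasurable_def split: split_indicator)
  then show ?thesis
    using assms(2) by (simp add: fmeasurable_def)
qed

lemma nonzero_if_nonzero_on_ball:
  assumes "r > 0" "\<And>x. x \<in> ball c r \<Longrightarrow> w x \<noteq> 0"
  shows "nonzero w"
  unfolding nonzero_def
proof
  assume "AE x in lebesgue. w x = 0"
  then have "AE x in lebesgue. x \<notin> ball c r"
    by eventually_elim (use assms in auto)
  then have "emeasure lebesgue (ball c r) = 0"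
    by (simp add: AE_iff_null_sets null_setsD1)
  then show False
    using content_ball_pos[OF assms(1), of c] by (simp add: emeasure_completion measure_def)
qed

lemma integral_difference_quotient_tendsto:
  fixes P P' :: "real \<Rightarrow> 'a \<Rightarrow> real"
  assumes deriv: "\<And>r x. ((\<lambda>r. P r x) has_real_derivative P' r x) (at r)"
    and bound: "\<And>r x. r \<in> {r0-1..r0+1} \<Longrightarrow> \<bar>P' r x\<bar> \<le> w x"
    and w: "integrable M w"
    and int: "\<And>r. r \<in> {r0-1..r0+1} \<Longrightarrow> integrable M (P r)"
    and meas: "P' r0 \<in> borel_measurable M"
    and Y: "\<And>i. Y i \<noteq> r0" "\<And>i. Y i \<in> {r0-1..r0+1}" "Y \<longlonglongrightarrow> r0"
  shows "(\<lambda>i. ((\<integral>x. P (Y i) x \<partial>M) - (\<integral>x. P r0 x \<partial>M)) / (Y i - r0)) \<longlonglongrightarrow> (\<integral>x. P' r0 x \<partial>M)"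
proof -
  have r0: "r0 \<in> {r0-1..r0+1}" by simp
  define q where "q i x = (P (Y i) x - P r0 x) / (Y i - r0)" for i x
  have "(\<lambda>i. \<integral>x. q i x \<partial>M) \<longlonglongrightarrow> (\<integral>x. P' r0 x \<partial>M)"
  proof (rule integral_dominated_convergence[OF meas _ w])
    show "(q i) \<in> borel_measurable M" for i
      using int[OF Y(2)] int[OF r0] unfolding q_def by measurable
    show "AE x in M. (\<lambda>i. q i x) \<longlonglongrightarrow> P' r0 x"
    proof (rule AE_I2)
      fix x
      have "((\<lambda>r. (P r x - P r0 x) / (r - r0)) \<longlongrightarrow> P' r0 x) (at r0)"
        using deriv[of x r0] by (simp add: has_field_derivative_iff)
      then show "(\<lambda>i. q i x) \<longlonglongrightarrow> P' r0 x"
        using Y unfolding tendsto_at_iff_sequentially by (auto simp: q_def comp_def)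
    qed
    show "AE x in M. norm (q i x) \<le> w x" for i
    proof (rule AE_I2)
      fix x
      have "\<bar>P (Y i) x - P r0 x\<bar> \<le> w x * \<bar>Y i - r0\<bar>"
      proof (rule field_differentiable_bound[where S="{min r0 (Y i)..max r0 (Y i)}", simplified])
        fix z assume "min r0 (Y i) \<le> z \<and> z \<le> max r0 (Y i)"
        then show "((\<lambda>r. P r x) has_real_derivative P' z x) (at z within {min r0 (Y i)..max r0 (Y i)})"
          and "\<bar>P' z x\<bar> \<le> w x"
          using Y(2)[of i] by (auto intro!: has_field_derivative_at_within deriv bound)
      qed auto
      then show "norm (q i x) \<le> w x"
        using Y(1)[of i] by (simp add: q_def abs_divide divide_le_eq)
    qed
  qed
  moreover have "(\<integral>x. q i x \<partial>M) = ((\<integral>x. P (Y i) x \<partial>M) - (\<integral>x. P r0 x \<partial>M)) / (Y i - r0)" for i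
    using int[OF Y(2)] int[OF r0] by (simp add: q_def)
  ultimately show ?thesis by simp
qed

lemma has_real_derivative_integral_dominated:
  fixes P P' :: "real \<Rightarrow> 'a \<Rightarrow> real"
  assumes deriv: "\<And>r x. ((\<lambda>r. P r x) has_real_derivative P' r x) (at r)"
    and bound: "\<And>r x. r \<in> {r0-1..r0+1} \<Longrightarrow> \<bar>P' r x\<bar> \<le> w x"
    and w: "integrable M w"
    and int: "\<And>r. r \<in> {r0-1..r0+1} \<Longrightarrow> integrable M (P r)"
    and meas: "P' r0 \<in> borel_measurable M"
  shows "((\<lambda>r. \<integral>x. P r x \<partial>M) has_real_derivative (\<integral>x. P' r0 x \<partial>M)) (at r0)"
proof -
  let ?I = "\<lambda>r. \<integral>x. P r x \<partial>M"
  have "((\<lambda>r. (?I r - ?I r0) / (r - r0)) \<longlongrightarrow> (\<integral>x. P' r0 x \<partial>M)) (at r0)"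
    unfolding tendsto_at_iff_sequentially comp_def
  proof (intro allI impI)
    fix X :: "nat \<Rightarrow> real"
    assume X: "\<forall>i. X i \<in> UNIV - {r0}" "X \<longlonglongrightarrow> r0"
    then obtain N where N: "\<And>n. n \<ge> N \<Longrightarrow> dist (X n) r0 < 1"
      unfolding lim_sequentially by (meson zero_less_one)
    have "(\<lambda>i. (?I (X (i + N)) - ?I r0) / (X (i + N) - r0)) \<longlonglongrightarrow> (\<integral>x. P' r0 x \<partial>M)"
    proof (rule integral_difference_quotient_tendsto[OF deriv bound w int meas])
      fix i
      show "X (i + N) \<noteq> r0" using X by auto
      show "X (i + N) \<in> {r0-1..r0+1}" using N[of "i + N"] by (auto simp: dist_real_def)
    qed (use LIMSEQ_ignore_initial_segment[OF X(2)] in auto)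
    then show "(\<lambda>i. (?I (X i) - ?I r0) / (X i - r0)) \<longlonglongrightarrow> (\<integral>x. P' r0 x \<partial>M)"
      by (rule LIMSEQ_offset)
  qed
  then show ?thesis by (simp add: has_field_derivative_iff)
qed

section \<open>Test functions and weak gradients\<close>

lemma continuous_imp_lebesgue_measurable:
  fixes f :: "'a::euclidean_space \<Rightarrow> 'b::topological_space"
  shows "continuous_on UNIV f \<Longrightarrow> f \<in> borel_measurable lebesgue"
  by (intro measurable_completion) (simp add: borel_measurable_continuous_onI)

lemma cc1I:
  assumes "c1_grad \<phi> g" "compact K" "K \<subseteq> U" "\<And>x. x \<notin> K \<Longrightarrow> \<phi> x = 0"
  shows "cc1 U \<phi> g"
proof -
  have sub: "closure {x. \<phi> x \<noteq> 0} \<subseteq> K"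
    using assms(2,4) by (intro closure_minimal) (auto intro: compact_imp_closed)
  then have "compact (closure {x. \<phi> x \<noteq> 0})"
    using assms(2) by (meson bounded_subset closed_closure compact_eq_bounded_closed)
  then show ?thesis using assms sub unfolding cc1_def c1_grad_def by auto
qed

lemma cc1_imp_c1_grad: "cc1 U \<phi> g \<Longrightarrow> c1_grad \<phi> g"
  by (simp add: cc1_def c1_grad_def)

lemma cc1_eq_0: "x \<notin> closure {x. \<phi> x \<noteq> 0} \<Longrightarrow> \<phi> x = 0"
  using closure_subset[of "{x. \<phi> x \<noteq> 0}"] by auto

lemma cc1_grad_eq_0:
  assumes \<phi>: "cc1 U \<phi> g" and x: "x \<notin> closure {x. \<phi> x \<noteq> 0}"
  shows "g x = 0"
proof -
  have "((\<lambda>y. 0) has_derivative (\<lambda>h. 0)) (at x)" by simp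
  then have "(\<phi> has_derivative (\<lambda>h. 0)) (at x)"
    by (rule has_derivative_transform_within_open[where s="- closure {x. \<phi> x \<noteq> 0}"])
       (use x in \<open>auto intro: cc1_eq_0\<close>)
  moreover have "(\<phi> has_derivative (\<lambda>h. g x \<bullet> h)) (at x)"
    using \<phi> by (simp add: cc1_def)
  ultimately have "(\<lambda>h. g x \<bullet> h) = (\<lambda>h. 0)"
    using has_derivative_unique by blast
  then have "g x \<bullet> g x = 0" by metis
  then show ?thesis by simp
qed

lemma cc1_bounded:
  assumes "cc1 U \<phi> g"
  obtains B where "\<And>x. \<bar>\<phi> x\<bar> \<le> B * indicator (closure {x. \<phi> x \<noteq> 0}) x"
proof -
  let ?S = "closure {x. \<phi> x \<noteq> 0}"
  have "compact (\<phi> ` ?S)"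
    using assms c1_grad_imp_continuous[OF cc1_imp_c1_grad[OF assms]]
    by (intro compact_continuous_image) (auto simp: cc1_def intro: continuous_on_subset)
  then obtain B where "\<And>y. y \<in> \<phi> ` ?S \<Longrightarrow> norm y \<le> B"
    by (meson bounded_iff compact_imp_bounded)
  then have "\<bar>\<phi> x\<bar> \<le> B * indicator ?S x" for x
    using cc1_eq_0[of x \<phi>] by (cases "x \<in> ?S") auto
  then show ?thesis by (rule that)
qed

lemma cc1_grad_bounded:
  assumes "cc1 U \<phi> g"
  obtains B where "\<And>x. norm (g x) \<le> B"
proof -
  let ?S = "closure {x. \<phi> x \<noteq> 0}"
  have "compact (g ` ?S)"
    using assms by (intro compact_continuous_image) (auto simp: cc1_def intro: continuous_on_subset)
  then obtain B where "\<And>y. y \<in> g ` ?S \<Longrightarrow> norm y \<le> B"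
    by (meson bounded_iff compact_imp_bounded)
  then have "norm (g x) \<le> max B 0" for x
    using cc1_grad_eq_0[OF assms, of x] by (cases "x \<in> ?S") force+
  then show ?thesis by (rule that)
qed

lemma integrable_cc1:
  fixes h :: "R3 \<Rightarrow> real"
  assumes "cc1 U \<phi> g" "continuous_on UNIV h" "\<And>x. \<phi> x = 0 \<Longrightarrow> g x = 0 \<Longrightarrow> h x = 0"
  shows "integrable lebesgue h"
proof (rule integrable_lebesgue_compact_support[OF assms(2)])
  show "compact (closure {x. \<phi> x \<noteq> 0})" using assms(1) by (simp add: cc1_def)
  show "h x = 0" if "x \<notin> closure {x. \<phi> x \<noteq> 0}" for x
    using assms(3) cc1_eq_0[OF that] cc1_grad_eq_0[OF assms(1) that] .
qed

text \<open>Integration by parts with one factor equal to 1: translate \<open>\<phi>\<close> in direction \<open>v\<close> and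
  differentiate the translation-invariant integral.\<close>
lemma integral_directional_derivative_eq_0:
  fixes \<phi> :: "'a::euclidean_space \<Rightarrow> real"
  assumes c1: "c1_grad \<phi> g"
    and vanish: "\<And>x. norm x > R \<Longrightarrow> \<phi> x = 0" "\<And>x. norm x > R \<Longrightarrow> g x = 0"
    and B: "\<And>x. norm (g x) \<le> B"
  shows "(\<integral>x. g x \<bullet> v \<partial>lebesgue) = 0"
proof -
  define P where "P r x = \<phi> (x + r *\<^sub>R v)" for r x
  define P' where "P' r x = g (x + r *\<^sub>R v) \<bullet> v" for r x
  let ?K = "cball (0::'a) (R + norm v)"
  have far: "norm (x + r *\<^sub>R v) > R" if "\<bar>r\<bar> \<le> 1" "x \<notin> ?K" for r x
  proof -
    have "norm (r *\<^sub>R v) \<le> norm v" using that(1) by (simp add: mult_left_le_one_le)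
    then show ?thesis using that(2) norm_triangle_ineq4[of "x + r *\<^sub>R v" "r *\<^sub>R v"] by simp
  qed
  have "((\<lambda>r. \<integral>x. P r x \<partial>lebesgue) has_real_derivative (\<integral>x. P' 0 x \<partial>lebesgue)) (at 0)"
  proof (rule has_real_derivative_integral_dominated)
    show "((\<lambda>r. P r x) has_real_derivative P' r x) (at r)" for r x
      unfolding P_def P'_def by (rule has_real_derivative_c1_grad_line[OF c1])
    show "\<bar>P' r x\<bar> \<le> B * norm v * indicator ?K x" if "r \<in> {0-1..0+1}" for r x
    proof (cases "x \<in> ?K")
      case True
      have "\<bar>P' r x\<bar> \<le> norm (g (x + r *\<^sub>R v)) * norm v"
        unfolding P'_def by (rule Cauchy_Schwarz_ineq2)
      also have "\<dots> \<le> B * norm v" using B by (rule mult_right_mono) simp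
      finally show ?thesis using True by simp
    qed (use that far vanish(2) in \<open>auto simp: P'_def\<close>)
    show "integrable lebesgue (\<lambda>x. B * norm v * indicator ?K x)"
      using integrable_indicator_compact[of ?K] by simp
    show "integrable lebesgue (P r)" if "r \<in> {0-1..0+1}" for r
      unfolding P_def
    proof (rule integrable_lebesgue_compact_support[OF _ compact_cball[of 0 "R + norm v"]])
      show "continuous_on UNIV (\<lambda>x. \<phi> (x + r *\<^sub>R v))"
        by (rule continuous_on_compose2[OF c1_grad_imp_continuous[OF c1]]) (intro continuous_intros, simp)
      show "\<phi> (x + r *\<^sub>R v) = 0" if "x \<notin> ?K" for x
        using \<open>r \<in> _\<close> that far vanish(1) by (simp add: abs_le_iff)
    qed
    show "P' 0 \<in> borel_measurable lebesgue"
      unfolding P'_def using c1_grad_imp_continuous_grad[OF c1]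
      by (intro continuous_imp_lebesgue_measurable continuous_intros) auto
  qed
  moreover have "(\<lambda>r. \<integral>x. P r x \<partial>lebesgue) = (\<lambda>r. \<integral>x. \<phi> x \<partial>lebesgue)"
    unfolding P_def using c1_grad_imp_continuous[OF c1]
    by (intro ext integral_lebesgue_translate borel_measurable_continuous_onI)
  ultimately have "((\<lambda>r. \<integral>x. \<phi> x \<partial>lebesgue) has_real_derivative (\<integral>x. P' 0 x \<partial>lebesgue)) (at 0)"
    by simp
  then have "(\<integral>x. P' 0 x \<partial>lebesgue) = 0"
    using DERIV_const by (rule DERIV_unique)
  then show ?thesis by (simp add: P'_def)
qed

lemma integral_grad_component_cc1:
  assumes \<phi>: "cc1 UNIV \<phi> g"
  shows "(\<integral>x. g x $ i \<partial>lebesgue) = 0"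
proof -
  obtain R where R: "\<And>x. x \<in> closure {x. \<phi> x \<noteq> 0} \<Longrightarrow> norm x \<le> R"
    using \<phi> unfolding cc1_def by (meson bounded_iff compact_imp_bounded)
  obtain B where "\<And>x. norm (g x) \<le> B" using cc1_grad_bounded[OF \<phi>] by blast
  moreover have "\<phi> x = 0" "g x = 0" if "norm x > R" for x
    using R[of x] that cc1_eq_0[of x \<phi>] cc1_grad_eq_0[OF \<phi>, of x] by force+
  ultimately have "(\<integral>x. g x \<bullet> axis i 1 \<partial>lebesgue) = 0"
    by (intro integral_directional_derivative_eq_0[OF cc1_imp_c1_grad[OF \<phi>]])
  then show ?thesis by (simp add: cart_eq_inner_axis)
qed

lemma is_weak_grad_cc1:
  assumes \<phi>: "cc1 U \<phi> g\<phi>"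
  shows "is_weak_grad \<phi> g\<phi>"
  unfolding is_weak_grad_def
proof (intro conjI allI impI)
  have c1: "c1_grad \<phi> g\<phi>" using \<phi> by (rule cc1_imp_c1_grad)
  note cont = c1_grad_imp_continuous[OF c1] c1_grad_imp_continuous_grad[OF c1]
  show "L2v g\<phi>" unfolding L2v_def
  proof
    show "g\<phi> \<in> borel_measurable lebesgue"
      using cont(2) by (rule continuous_imp_lebesgue_measurable)
    show "integrable lebesgue (\<lambda>x. (norm (g\<phi> x))\<^sup>2)"
      by (rule integrable_cc1[OF \<phi>]) (intro continuous_intros cont, simp)
  qed
  fix \<psi> g\<psi> i
  assume \<psi>: "cc1 UNIV \<psi> g\<psi>"
  have c2: "c1_grad \<psi> g\<psi>" using \<psi> by (rule cc1_imp_c1_grad)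
  note cont2 = c1_grad_imp_continuous[OF c2] c1_grad_imp_continuous_grad[OF c2]
  have prod: "cc1 UNIV (\<lambda>x. \<phi> x * \<psi> x) (\<lambda>x. \<phi> x *\<^sub>R g\<psi> x + \<psi> x *\<^sub>R g\<phi> x)"
  proof (rule cc1I[OF c1_grad_mult[OF c1 c2]])
    show "compact (closure {x. \<phi> x \<noteq> 0})" using \<phi> by (simp add: cc1_def)
    show "\<phi> x * \<psi> x = 0" if "x \<notin> closure {x. \<phi> x \<noteq> 0}" for x
      using cc1_eq_0[OF that] by simp
  qed simp
  have i1: "integrable lebesgue (\<lambda>x. \<phi> x * (g\<psi> x $ i))"
    by (rule integrable_cc1[OF \<phi>]) (intro continuous_intros cont cont2, simp)
  have i2: "integrable lebesgue (\<lambda>x. (g\<phi> x $ i) * \<psi> x)"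
    by (rule integrable_cc1[OF \<phi>]) (intro continuous_intros cont cont2, simp)
  have "0 = (\<integral>x. (\<phi> x *\<^sub>R g\<psi> x + \<psi> x *\<^sub>R g\<phi> x) $ i \<partial>lebesgue)"
    by (rule integral_grad_component_cc1[OF prod, symmetric])
  also have "\<dots> = (\<integral>x. \<phi> x * (g\<psi> x $ i) + (g\<phi> x $ i) * \<psi> x \<partial>lebesgue)"
    by (simp add: mult.commute)
  also have "\<dots> = (\<integral>x. \<phi> x * (g\<psi> x $ i) \<partial>lebesgue) + (\<integral>x. (g\<phi> x $ i) * \<psi> x \<partial>lebesgue)"
    using i1 i2 by (rule Bochner_Integration.integral_add)
  finally show "(\<integral>x. \<phi> x * (g\<psi> x $ i) \<partial>lebesgue) = - (\<integral>x. (g\<phi> x $ i) * \<psi> x \<partial>lebesgue)"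
    by linarith
qed

definition box_cutoff :: "nat \<Rightarrow> R3 \<Rightarrow> R3 \<Rightarrow> R3 \<Rightarrow> real" where
  "box_cutoff n a b x = (\<Prod>i\<in>UNIV. smooth_step (n * (x $ i - a $ i)) * smooth_step (n * (b $ i - x $ i)))"

lemma box_cutoff_eq_0:
  assumes "x \<notin> cbox a b"
  shows "box_cutoff n a b x = 0"
proof -
  obtain i where "x $ i < a $ i \<or> b $ i < x $ i"
    using assms by (auto simp: mem_box_cart not_le)
  then have "smooth_step (n * (x $ i - a $ i)) * smooth_step (n * (b $ i - x $ i)) = 0"
    by (auto intro!: smooth_step_eq_0 mult_nonneg_nonpos)
  then show ?thesis
    unfolding box_cutoff_def by (intro prod_zero) auto
qed

lemma c1_grad_smooth_step_coordinate: "\<exists>G. c1_grad (\<lambda>x::R3. smooth_step (c * x $ i + d)) G"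
proof -
  obtain s' where "\<And>y. (smooth_step has_real_derivative s' y) (at y)" "continuous_on UNIV s'"
    using smooth_step_C1 by blast
  from c1_grad_compose[OF this c1_grad_affine[of c "axis i 1" d]]
  show ?thesis by (auto simp: cart_eq_inner_axis inner_commute)
qed

lemma box_cutoff_cc1: "\<exists>G. cc1 UNIV (box_cutoff n a b) G"
proof -
  have "\<exists>G. c1_grad (\<lambda>x. smooth_step (n * (x $ i - a $ i)) * smooth_step (n * (b $ i - x $ i))) G" for i
  proof -
    obtain G1 G2 where "c1_grad (\<lambda>x. smooth_step (n * x $ i + (- n * a $ i))) G1"
      "c1_grad (\<lambda>x. smooth_step ((- n) * x $ i + n * b $ i)) G2"
      using c1_grad_smooth_step_coordinate by meson
    from c1_grad_mult[OF this] show ?thesis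
      by (auto simp: algebra_simps)
  qed
  then have "\<forall>i. \<exists>G. c1_grad (\<lambda>x. smooth_step (n * (x $ i - a $ i)) * smooth_step (n * (b $ i - x $ i))) G"
    by blast
  then obtain G where "\<forall>i. c1_grad (\<lambda>x. smooth_step (n * (x $ i - a $ i)) * smooth_step (n * (b $ i - x $ i))) (G i)"
    by (auto dest: choice)
  then have "\<exists>G'. c1_grad (box_cutoff n a b) G'"
    unfolding box_cutoff_def[abs_def] by (intro c1_grad_prod) auto
  then obtain G' where "c1_grad (box_cutoff n a b) G'" ..
  then have "cc1 UNIV (box_cutoff n a b) G'"
    by (rule cc1I[where K="cbox a b"]) (auto intro: box_cutoff_eq_0)
  then show ?thesis by blast
qed

lemma abs_box_cutoff_le: "\<bar>box_cutoff n a b x\<bar> \<le> indicator (cbox a b) x"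
proof (cases "x \<in> cbox a b")
  case True
  have "\<bar>box_cutoff n a b x\<bar> \<le> (\<Prod>i\<in>(UNIV::3 set). 1)"
    unfolding box_cutoff_def abs_prod
    by (intro prod_mono) (auto simp: abs_mult smooth_step_bounds intro: mult_le_one)
  then show ?thesis using True by simp
next
  case False
  then show ?thesis by (simp add: box_cutoff_eq_0)
qed

lemma box_cutoff_tendsto: "(\<lambda>n. box_cutoff n a b x) \<longlonglongrightarrow> indicator (box a b) x"
proof (cases "x \<in> box a b")
  case True
  define m where "m = Min (range (\<lambda>i. min (x $ i - a $ i) (b $ i - x $ i)))"
  have "m > 0"
    using True unfolding m_def by (subst Min_gr_iff) (auto simp: mem_box_cart)
  have "m \<le> min (x $ i - a $ i) (b $ i - x $ i)" for i
    unfolding m_def by (rule Min_le) auto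
  then have m_le: "m \<le> x $ i - a $ i" "m \<le> b $ i - x $ i" for i
    by (meson min.boundedE)+
  obtain N :: nat where N: "1 / m < N" using reals_Archimedean2 by blast
  have "box_cutoff n a b x = 1" if "n \<ge> N" for n
  proof -
    have "1 < N * m" using N \<open>m > 0\<close> by (simp add: divide_less_eq)
    also have "\<dots> \<le> n * m" using that \<open>m > 0\<close> by (simp add: mult_right_mono)
    finally have "1 \<le> n * m" by simp
    then have "1 \<le> n * (x $ i - a $ i)" "1 \<le> n * (b $ i - x $ i)" for i
      using m_le[of i] by (smt (verit) mult_left_mono of_nat_0_le_iff)+
    then show ?thesis unfolding box_cutoff_def by (simp add: smooth_step_eq_1)
  qed
  then have "eventually (\<lambda>n. box_cutoff n a b x = 1) sequentially"
    by (auto simp: eventually_sequentially)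
  then show ?thesis using True by (simp add: tendsto_eventually)
next
  case False
  then obtain i where "x $ i \<le> a $ i \<or> b $ i \<le> x $ i"
    by (auto simp: mem_box_cart not_less)
  then have "box_cutoff n a b x = 0" for n
    unfolding box_cutoff_def by (intro prod_zero) (auto intro!: smooth_step_eq_0 mult_nonneg_nonpos)
  then show ?thesis using False by simp
qed

lemma AE_eq_0_if_box_integrals_eq_0_lborel:
  fixes H :: "'a::euclidean_space \<Rightarrow> real"
  assumes [measurable]: "H \<in> borel_measurable borel"
    and int: "\<And>a b. integrable lborel (\<lambda>x. H x * indicator (box a b) x)"
    and zero: "\<And>a b. (\<integral>x. H x * indicator (box a b) x \<partial>lborel) = 0"
  shows "AE x in lborel. H x = 0"
proof -
  \<comment> \<open>the measures with densities \<open>H\<^sup>+\<close> and \<open>H\<^sup>-\<close> agree on the generating family of boxes\<close>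
  let ?pos = "density lborel (\<lambda>x. ennreal (H x))" and ?neg = "density lborel (\<lambda>x. ennreal (- H x))"
  have box: "emeasure ?pos (box a b) = emeasure ?neg (box a b)" "emeasure ?pos (box a b) \<noteq> \<infinity>" for a b
  proof -
    obtain r q where rq: "0 \<le> r" "0 \<le> q"
      "(\<integral>\<^sup>+x. ennreal (H x * indicator (box a b) x) \<partial>lborel) = ennreal r"
      "(\<integral>\<^sup>+x. ennreal (- (H x * indicator (box a b) x)) \<partial>lborel) = ennreal q"
      "(\<integral>x. H x * indicator (box a b) x \<partial>lborel) = r - q"
      by (rule integrableE[OF int])
    have "emeasure ?pos (box a b) = ennreal r" "emeasure ?neg (box a b) = ennreal q"
      by (subst emeasure_density; auto simp: rq(3,4)[symmetric] intro!: nn_integral_cong split: split_indicator)+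
    then show "emeasure ?pos (box a b) = emeasure ?neg (box a b)" "emeasure ?pos (box a b) \<noteq> \<infinity>"
      using rq(5) zero[of a b] by auto
  qed
  have "?pos = ?neg"
  proof (rule measure_eqI_generator_eq[where E="range (\<lambda>(a, b). box a b)" and \<Omega>=UNIV
        and A="\<lambda>n. box (- (real n *\<^sub>R One)) (real n *\<^sub>R One)"])
    show "Int_stable (range (\<lambda>(a, b). box a b :: 'a set))"
      by (auto simp: Int_stable_def box_Int_box)
    show "sets ?pos = sigma_sets UNIV (range (\<lambda>(a, b). box a b))"
      "sets ?neg = sigma_sets UNIV (range (\<lambda>(a, b). box a b))"
      by (simp_all add: borel_eq_box)
    show "(\<Union>n. box (- (real n *\<^sub>R One)) (real n *\<^sub>R One)) = (UNIV :: 'a set)"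
      by (rule UN_box_eq_UNIV)
  qed (use box in auto)
  then have "AE x in lborel. ennreal (H x) = ennreal (- H x)"
    by (intro sigma_finite_measure.density_unique[OF sigma_finite_lborel]) auto
  then show ?thesis
  proof eventually_elim
    case (elim x)
    have "ennreal (H x) = 0 \<or> ennreal (- H x) = 0"
      by (cases "H x \<ge> 0") (auto simp: ennreal_eq_0_iff)
    then have "ennreal (H x) = 0 \<and> ennreal (- H x) = 0"
      using elim by auto
    then show "H x = 0"
      by (auto simp: ennreal_eq_0_iff)
  qed
qed

lemma AE_eq_0_if_box_integrals_eq_0:
  fixes H :: "'a::euclidean_space \<Rightarrow> real"
  assumes H: "H \<in> borel_measurable lebesgue"
    and int: "\<And>a b. integrable lebesgue (\<lambda>x. H x * indicator (box a b) x)"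
    and zero: "\<And>a b. (\<integral>x. H x * indicator (box a b) x \<partial>lebesgue) = 0"
  shows "AE x in lebesgue. H x = 0"
proof -
  obtain H' where H'[measurable]: "H' \<in> borel_measurable borel" and "AE x in lborel. H x = H' x"
    using completion_ex_borel_measurable_real[OF H] by auto
  from this(2) have ae: "AE x in lebesgue. H x = H' x" by (rule AE_completion)
  have int': "integrable lborel (\<lambda>x. H' x * indicator (box a b) x)"
    and zero': "(\<integral>x. H' x * indicator (box a b) x \<partial>lborel) = 0" for a b
  proof -
    have m: "(\<lambda>x. H' x * indicator (box a b) x) \<in> borel_measurable lborel" by measurable
    have eq: "AE x in lebesgue. H x * indicator (box a b) x = H' x * indicator (box a b) x"
      using ae by eventually_elim simp
    show "integrable lborel (\<lambda>x. H' x * indicator (box a b) x)"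
      using integrable_cong_AE[OF borel_measurable_integrable[OF int] measurable_completion[OF m] eq] int[of a b] m
      by (simp add: integrable_completion)
    show "(\<integral>x. H' x * indicator (box a b) x \<partial>lborel) = 0"
      using integral_cong_AE[OF borel_measurable_integrable[OF int] measurable_completion[OF m] eq] zero[of a b] m
      by (simp add: integral_completion)
  qed
  have "AE x in lborel. H' x = 0"
    by (rule AE_eq_0_if_box_integrals_eq_0_lborel[OF H' int' zero'])
  then have "AE x in lebesgue. H' x = 0" by (rule AE_completion)
  with ae show ?thesis by eventually_elim simp
qed

lemma AE_eq_0_if_orthogonal_cc1:
  fixes H :: "R3 \<Rightarrow> real"
  assumes H: "H \<in> borel_measurable lebesgue" "integrable lebesgue (\<lambda>x. (H x)\<^sup>2)"
    and orth: "\<And>\<psi> g. cc1 UNIV \<psi> g \<Longrightarrow> (\<integral>x. H x * \<psi> x \<partial>lebesgue) = 0"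
  shows "AE x in lebesgue. H x = 0"
proof (rule AE_eq_0_if_box_integrals_eq_0[OF H(1)])
  fix a b :: R3
  have box_sets: "box a b \<in> sets lebesgue" "cbox a b \<in> sets lebesgue"
    by (simp_all add: sets_completionI_sets)
  show int: "integrable lebesgue (\<lambda>x. H x * indicator (box a b) x)"
    by (rule integrable_mult_compact_support[OF H borel_measurable_indicator[OF box_sets(1)] _ compact_cbox[of a b], of 1])
       (auto split: split_indicator simp: mem_box_cart less_imp_le)
  \<comment> \<open>approximate the indicator of the box by the cutoffs, using dominated convergence\<close>
  have "(\<lambda>n. \<integral>x. H x * box_cutoff n a b x \<partial>lebesgue) \<longlonglongrightarrow> (\<integral>x. H x * indicator (box a b) x \<partial>lebesgue)"
  proof (rule integral_dominated_convergence[where w="\<lambda>x. \<bar>H x\<bar> * indicator (cbox a b) x"])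
    show "(\<lambda>x. H x * indicator (box a b) x) \<in> borel_measurable lebesgue"
      using int by (rule borel_measurable_integrable)
    show "(\<lambda>x. H x * box_cutoff n a b x) \<in> borel_measurable lebesgue" for n
    proof -
      obtain G where "cc1 UNIV (box_cutoff n a b) G" using box_cutoff_cc1 by blast
      then have "box_cutoff n a b \<in> borel_measurable lebesgue"
        by (intro continuous_imp_lebesgue_measurable c1_grad_imp_continuous cc1_imp_c1_grad)
      then show ?thesis using H(1) by simp
    qed
    show "integrable lebesgue (\<lambda>x. \<bar>H x\<bar> * indicator (cbox a b) x)"
      by (rule integrable_mult_compact_support[OF borel_measurable_abs[OF H(1)] _
            borel_measurable_indicator[OF box_sets(2)] _ compact_cbox, of 1])
         (use H(2) in \<open>auto split: split_indicator\<close>)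
    show "AE x in lebesgue. (\<lambda>n. H x * box_cutoff n a b x) \<longlonglongrightarrow> H x * indicator (box a b) x"
      by (intro AE_I2 tendsto_mult_left box_cutoff_tendsto)
    show "AE x in lebesgue. norm (H x * box_cutoff n a b x) \<le> \<bar>H x\<bar> * indicator (cbox a b) x" for n
      by (intro AE_I2) (simp add: abs_mult mult_left_mono abs_box_cutoff_le)
  qed
  moreover have "(\<integral>x. H x * box_cutoff n a b x \<partial>lebesgue) = 0" for n
    using box_cutoff_cc1[of n a b] orth by blast
  ultimately show "(\<integral>x. H x * indicator (box a b) x \<partial>lebesgue) = 0"
    by (simp add: LIMSEQ_const_iff)
qed

lemma integrable_square_component_L2v:
  assumes "L2v G"
  shows "integrable lebesgue (\<lambda>x. (G x $ i)\<^sup>2)"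
proof (rule Bochner_Integration.integrable_bound)
  show "integrable lebesgue (\<lambda>x. (norm (G x))\<^sup>2)" using assms by (simp add: L2v_def)
  show "(\<lambda>x. (G x $ i)\<^sup>2) \<in> borel_measurable lebesgue"
    using assms unfolding L2v_def
    by (intro borel_measurable_power measurable_compose[OF _ borel_measurable_nth]) auto
  show "AE x in lebesgue. norm ((G x $ i)\<^sup>2) \<le> norm ((norm (G x))\<^sup>2)"
  proof (rule AE_I2)
    fix x
    have "\<bar>G x $ i\<bar> \<le> \<bar>norm (G x)\<bar>" using component_le_norm_cart[of "G x" i] by simp
    then show "norm ((G x $ i)\<^sup>2) \<le> norm ((norm (G x))\<^sup>2)"
      using abs_le_square_iff[of "G x $ i" "norm (G x)"] by simp
  qed
qed

lemma weak_grad_unique_AE: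
  assumes G1: "is_weak_grad u G1" and G2: "is_weak_grad u G2"
  shows "AE x in lebesgue. G1 x = G2 x"
proof -
  have L: "L2v G1" "L2v G2" using G1 G2 by (auto simp: is_weak_grad_def)
  have meas: "(\<lambda>x. G1 x $ i) \<in> borel_measurable lebesgue" "(\<lambda>x. G2 x $ i) \<in> borel_measurable lebesgue" for i
    using L unfolding L2v_def by (auto intro: measurable_compose[OF _ borel_measurable_nth])
  have "AE x in lebesgue. G1 x $ i - G2 x $ i = 0" for i
  proof (rule AE_eq_0_if_orthogonal_cc1)
    show "(\<lambda>x. G1 x $ i - G2 x $ i) \<in> borel_measurable lebesgue"
      using meas by measurable
    show "integrable lebesgue (\<lambda>x. (G1 x $ i - G2 x $ i)\<^sup>2)"
    proof (rule Bochner_Integration.integrable_bound)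
      show "integrable lebesgue (\<lambda>x. 2 * (G1 x $ i)\<^sup>2 + 2 * (G2 x $ i)\<^sup>2)"
        using integrable_square_component_L2v[OF L(1)] integrable_square_component_L2v[OF L(2)] by auto
      show "(\<lambda>x. (G1 x $ i - G2 x $ i)\<^sup>2) \<in> borel_measurable lebesgue"
        using meas by measurable
      have "(G1 x $ i - G2 x $ i)\<^sup>2 \<le> 2 * (G1 x $ i)\<^sup>2 + 2 * (G2 x $ i)\<^sup>2" for x
        using zero_le_power2[of "G1 x $ i + G2 x $ i"] by (simp add: power2_eq_square algebra_simps)
      then show "AE x in lebesgue. norm ((G1 x $ i - G2 x $ i)\<^sup>2) \<le> norm (2 * (G1 x $ i)\<^sup>2 + 2 * (G2 x $ i)\<^sup>2)"
        by (intro AE_I2) simp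
    qed
    show "(\<integral>x. (G1 x $ i - G2 x $ i) * \<psi> x \<partial>lebesgue) = 0" if \<psi>: "cc1 UNIV \<psi> g" for \<psi> g
    proof -
      obtain B where B: "\<And>x. \<bar>\<psi> x\<bar> \<le> B * indicator (closure {x. \<psi> x \<noteq> 0}) x"
        using cc1_bounded[OF \<psi>] by blast
      have K: "compact (closure {x. \<psi> x \<noteq> 0})" using \<psi> by (simp add: cc1_def)
      have \<psi>_meas: "\<psi> \<in> borel_measurable lebesgue"
        using \<psi> by (intro continuous_imp_lebesgue_measurable c1_grad_imp_continuous cc1_imp_c1_grad)
      have int: "integrable lebesgue (\<lambda>x. G1 x $ i * \<psi> x)" "integrable lebesgue (\<lambda>x. G2 x $ i * \<psi> x)"
        using integrable_mult_compact_support[OF meas(1) integrable_square_component_L2v[OF L(1)] \<psi>_meas B K]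
          integrable_mult_compact_support[OF meas(2) integrable_square_component_L2v[OF L(2)] \<psi>_meas B K]
        by auto
      have "(\<integral>x. (G1 x $ i - G2 x $ i) * \<psi> x \<partial>lebesgue) =
          (\<integral>x. G1 x $ i * \<psi> x \<partial>lebesgue) - (\<integral>x. G2 x $ i * \<psi> x \<partial>lebesgue)"
        using Bochner_Integration.integral_diff[OF int] by (simp add: left_diff_distrib)
      also have "\<dots> = 0"
        using G1 G2 \<psi> unfolding is_weak_grad_def
        by (metis (no_types, lifting) diff_self minus_equation_iff)
      finally show ?thesis .
    qed
  qed
  then have "AE x in lebesgue. \<forall>i\<in>UNIV. G1 x $ i - G2 x $ i = 0"
    by (intro AE_finite_allI) auto
  then show ?thesis by eventually_elim (simp add: vec_eq_iff)
qed

lemma h1norm2_cc1: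
  assumes \<phi>: "cc1 U \<phi> g"
  shows "h1norm2 \<phi> = (\<integral>x. (norm (g x))\<^sup>2 + (\<phi> x)\<^sup>2 \<partial>lebesgue)"
proof -
  have G: "is_weak_grad \<phi> g" using \<phi> by (rule is_weak_grad_cc1)
  then have W: "is_weak_grad \<phi> (wgrad \<phi>)" unfolding wgrad_def by (rule someI[where P="is_weak_grad \<phi>"])
  have "wgrad \<phi> \<in> borel_measurable lebesgue" "g \<in> borel_measurable lebesgue"
    using G W by (simp_all add: is_weak_grad_def L2v_def)
  moreover have "\<phi> \<in> borel_measurable lebesgue"
    using \<phi> by (intro continuous_imp_lebesgue_measurable c1_grad_imp_continuous cc1_imp_c1_grad)
  ultimately show ?thesis
    unfolding h1norm2_def using weak_grad_unique_AE[OF W G] by (intro integral_cong_AE) auto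
qed

section \<open>Bump functions\<close>

definition bump :: "R3 \<Rightarrow> real \<Rightarrow> R3 \<Rightarrow> real" where
  "bump c e x = pos_sq (e\<^sup>2 - (norm (x - c))\<^sup>2)"

definition bump_grad :: "R3 \<Rightarrow> real \<Rightarrow> R3 \<Rightarrow> R3" where
  "bump_grad c e x = (- 4 * max 0 (e\<^sup>2 - (norm (x - c))\<^sup>2)) *\<^sub>R (x - c)"

lemma c1_grad_bump: "c1_grad (bump c e) (bump_grad c e)"
proof -
  have "c1_grad (\<lambda>x. e\<^sup>2 + (- 1) * (norm (x - c))\<^sup>2) (\<lambda>x. 0 + (- 1) *\<^sub>R 2 *\<^sub>R (x - c))"
    by (intro c1_grad_add c1_grad_const c1_grad_scale c1_grad_norm_diff_sq)
  from c1_grad_compose[OF pos_sq_deriv _ this] show ?thesis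
    unfolding bump_def[abs_def] bump_grad_def[abs_def] by (simp add: continuous_intros)
qed

lemma continuous_on_bump: "continuous_on UNIV (bump c e)"
  by (rule c1_grad_imp_continuous[OF c1_grad_bump])

lemma continuous_on_bump_grad: "continuous_on UNIV (bump_grad c e)"
  by (rule c1_grad_imp_continuous_grad[OF c1_grad_bump])

lemma
  assumes "x \<notin> ball c e" "e \<ge> 0"
  shows bump_eq_0: "bump c e x = 0" and bump_grad_eq_0: "bump_grad c e x = 0"
proof -
  have "e\<^sup>2 \<le> (norm (x - c))\<^sup>2"
    using assms by (intro power_mono) (auto simp: dist_norm norm_minus_commute)
  then show "bump c e x = 0" "bump_grad c e x = 0"
    by (simp_all add: bump_def bump_grad_def pos_sq_eq_0)
qed

lemma bump_nonneg: "bump c e x \<ge> 0"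
  by (simp add: bump_def pos_sq_nonneg)

lemma bump_pos: "x \<in> ball c e \<Longrightarrow> bump c e x > 0"
  by (auto simp: bump_def dist_norm norm_minus_commute intro!: pos_sq_pos power_strict_mono)

lemma bump_le: "bump c e x \<le> e ^ 4"
proof -
  have "(max 0 (e\<^sup>2 - (norm (x - c))\<^sup>2))\<^sup>2 \<le> (e\<^sup>2)\<^sup>2"
    by (intro power_mono) auto
  then show ?thesis by (simp add: bump_def pos_sq_def)
qed

lemma bump_ge_on_half_ball:
  assumes "x \<in> ball c (e/2)"
  shows "(3 * e\<^sup>2 / 4)\<^sup>2 \<le> bump c e x"
proof -
  have "(norm (x - c))\<^sup>2 \<le> (e/2)\<^sup>2"
    using assms by (intro power_mono) (auto simp: dist_norm norm_minus_commute)
  then have "3 * e\<^sup>2 / 4 \<le> e\<^sup>2 - (norm (x - c))\<^sup>2"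
    by (simp add: power_divide)
  then have "3 * e\<^sup>2 / 4 \<le> max 0 (e\<^sup>2 - (norm (x - c))\<^sup>2)"
    by linarith
  then show ?thesis unfolding bump_def pos_sq_def by (intro power_mono) auto
qed

lemma integrable_bump_support:
  fixes h :: "R3 \<Rightarrow> real"
  assumes "continuous_on UNIV h" "\<And>x. x \<notin> ball c e \<Longrightarrow> h x = 0"
  shows "integrable lebesgue h"
  using assms by (intro integrable_lebesgue_compact_support[OF _ compact_cball[of c e]]) auto

lemma integral_bump_translate:
  fixes G :: "real \<times> R3 \<Rightarrow> real"
  assumes "continuous_on UNIV G"
  shows "(\<integral>x. G (bump c e x, bump_grad c e x) \<partial>lebesgue) = (\<integral>x. G (bump 0 e x, bump_grad 0 e x) \<partial>lebesgue)"
proof -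
  have "continuous_on UNIV (\<lambda>x. G (bump 0 e x, bump_grad 0 e x))"
    by (intro continuous_on_compose2[OF assms] continuous_intros continuous_on_bump continuous_on_bump_grad) auto
  from integral_lebesgue_translate[OF borel_measurable_continuous_onI[OF this], of "- c"] show ?thesis
    by (simp add: bump_def bump_grad_def)
qed

definition bump_energy :: "real \<Rightarrow> real" where
  "bump_energy e = (\<integral>x. (norm (bump_grad 0 e x))\<^sup>2 + (bump 0 e x)\<^sup>2 \<partial>lebesgue)"

lemma bump_energy_pos:
  assumes "e > 0"
  shows "bump_energy e > 0"
proof -
  have "0 < ((3 * e\<^sup>2 / 4)\<^sup>2)\<^sup>2 * measure lebesgue (ball (0::R3) (e/2))"
    using assms content_ball_pos[of "e/2" "0::R3"] by simp
  also have "\<dots> \<le> bump_energy e"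
    unfolding bump_energy_def
  proof (rule integral_lebesgue_ge_on_set)
    show "integrable lebesgue (\<lambda>x. (norm (bump_grad 0 e x))\<^sup>2 + (bump 0 e x)\<^sup>2)"
      by (rule integrable_bump_support[where c=0 and e=e])
         (use assms in \<open>auto simp: bump_eq_0 bump_grad_eq_0 intro!: continuous_intros continuous_on_bump continuous_on_bump_grad\<close>)
    show "((3 * e\<^sup>2 / 4)\<^sup>2)\<^sup>2 \<le> (norm (bump_grad 0 e x))\<^sup>2 + (bump 0 e x)\<^sup>2" if "x \<in> ball 0 (e/2)" for x
      using power_mono[OF bump_ge_on_half_ball[OF that], of 2] by (simp add: add_increasing)
  qed auto
  finally show ?thesis .
qed

definition bump_potential :: "(real \<Rightarrow> real) \<Rightarrow> real \<Rightarrow> real \<Rightarrow> real" where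
  "bump_potential F e r = (\<integral>x. F (r * bump 0 e x) \<partial>lebesgue)"

lemma integral_F_bump:
  fixes F :: "real \<Rightarrow> real"
  assumes "continuous_on UNIV F"
  shows "(\<integral>x. F (r * bump c e x) \<partial>lebesgue) = bump_potential F e r"
  using integral_bump_translate[of "\<lambda>p. F (r * fst p)" c e] assms
  by (simp add: bump_potential_def continuous_on_compose2[OF assms] continuous_intros)

lemma integrable_F_bump:
  fixes F :: "real \<Rightarrow> real"
  assumes "continuous_on UNIV F" "F 0 = 0" "e \<ge> 0"
  shows "integrable lebesgue (\<lambda>x. F (r * bump c e x))"
proof (rule integrable_bump_support[where c=c and e=e])
  show "continuous_on UNIV (\<lambda>x. F (r * bump c e x))"
    by (rule continuous_on_compose2[OF assms(1)]) (auto intro!: continuous_intros continuous_on_bump)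
qed (use assms in \<open>simp add: bump_eq_0\<close>)

definition bump_potential_deriv :: "(real \<Rightarrow> real) \<Rightarrow> real \<Rightarrow> real \<Rightarrow> real" where
  "bump_potential_deriv f e r = (\<integral>x. f (r * bump 0 e x) * bump 0 e x \<partial>lebesgue)"

lemma bump_potential_has_derivative:
  assumes F: "\<And>s. (F has_real_derivative f s) (at s)" "F 0 = 0" and f: "continuous_on UNIV f"
    and e: "e \<ge> 0"
  shows "(bump_potential F e has_real_derivative bump_potential_deriv f e r0) (at r0)"
proof -
  have F_cont: "continuous_on UNIV F"
    using F(1) by (intro continuous_at_imp_continuous_on ballI DERIV_isCont) auto
  define L where "L = (\<bar>r0\<bar> + 1) * e ^ 4"
  obtain B where B: "\<And>y. y \<in> f ` {-L..L} \<Longrightarrow> norm y \<le> B"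
    using compact_continuous_image[OF continuous_on_subset[OF f] compact_Icc]
    by (meson bounded_iff compact_imp_bounded top_greatest)
  show ?thesis
    unfolding bump_potential_def[abs_def] bump_potential_deriv_def
  proof (rule has_real_derivative_integral_dominated)
    show "((\<lambda>r. F (r * bump 0 e x)) has_real_derivative f (r * bump 0 e x) * bump 0 e x) (at r)" for r x
      by (rule DERIV_chain2[OF F(1)]) (auto intro!: derivative_eq_intros)
    show "\<bar>f (r * bump 0 e x) * bump 0 e x\<bar> \<le> B * e ^ 4 * indicator (cball 0 e) x"
      if r: "r \<in> {r0-1..r0+1}" for r x
    proof (cases "x \<in> cball 0 e")
      case True
      have b: "0 \<le> bump 0 e x" "bump 0 e x \<le> e ^ 4" by (rule bump_nonneg, rule bump_le)
      then have "\<bar>r * bump 0 e x\<bar> \<le> L"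
        using r unfolding L_def by (auto simp: abs_mult intro!: mult_mono)
      then have "\<bar>f (r * bump 0 e x)\<bar> \<le> B" using B by (auto simp: abs_le_iff)
      then show ?thesis
        using b True by (simp add: abs_mult mult_mono')
    qed (use e bump_eq_0 in auto)
    show "integrable lebesgue (\<lambda>x. B * e ^ 4 * indicator (cball (0::R3) e) x)"
      using integrable_indicator_compact[of "cball (0::R3) e"] by simp
    show "integrable lebesgue (\<lambda>x. F (r * bump 0 e x))" for r
      using F_cont F(2) e by (rule integrable_F_bump)
    show "(\<lambda>x. f (r0 * bump 0 e x) * bump 0 e x) \<in> borel_measurable lebesgue"
      by (intro continuous_imp_lebesgue_measurable continuous_intros continuous_on_compose2[OF f]
          continuous_on_bump) auto
  qed
qed

section \<open>Two bumps in disjoint domains\<close>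

locale two_bumps =
  fixes \<Omega>1 \<Omega>2 :: "R3 set" and c1 c2 :: R3 and e :: real
  assumes e_pos: "e > 0" and cball1: "cball c1 e \<subseteq> \<Omega>1" and cball2: "cball c2 e \<subseteq> \<Omega>2"
    and disjoint: "\<Omega>1 \<inter> \<Omega>2 = {}"
begin

definition bump_pair :: "real \<Rightarrow> real \<Rightarrow> R3 \<Rightarrow> real" where
  "bump_pair \<alpha> \<beta> x = \<alpha> * bump c1 e x + \<beta> * bump c2 e x"

lemma bump_pair_add_scaled: "(\<lambda>x. bump_pair \<alpha> \<beta> x + t * bump_pair \<gamma> \<delta> x) = bump_pair (\<alpha> + t * \<gamma>) (\<beta> + t * \<delta>)"
  by (auto simp: bump_pair_def algebra_simps)

lemma bumps_separated:
  obtains "bump c1 e x = 0" "bump_grad c1 e x = 0" | "bump c2 e x = 0" "bump_grad c2 e x = 0"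
proof (cases "x \<in> ball c1 e")
  case True
  then have "x \<notin> ball c2 e"
    using cball1 cball2 disjoint ball_subset_cball by blast
  then show thesis using that(2) bump_eq_0 bump_grad_eq_0 e_pos by simp
next
  case False
  then show thesis using that(1) bump_eq_0 bump_grad_eq_0 e_pos by simp
qed

lemma cc1_bump_pair:
  "cc1 (\<Omega>1 \<union> \<Omega>2) (bump_pair \<alpha> \<beta>) (\<lambda>x. \<alpha> *\<^sub>R bump_grad c1 e x + \<beta> *\<^sub>R bump_grad c2 e x)"
  unfolding bump_pair_def[abs_def]
proof (rule cc1I[where K="cball c1 e \<union> cball c2 e"])
  show "c1_grad (\<lambda>x. \<alpha> * bump c1 e x + \<beta> * bump c2 e x) (\<lambda>x. \<alpha> *\<^sub>R bump_grad c1 e x + \<beta> *\<^sub>R bump_grad c2 e x)"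
    by (intro c1_grad_add c1_grad_scale c1_grad_bump)
  show "\<alpha> * bump c1 e x + \<beta> * bump c2 e x = 0" if "x \<notin> cball c1 e \<union> cball c2 e" for x
    using that e_pos bump_eq_0[of x c1 e] bump_eq_0[of x c2 e] by auto
qed (use cball1 cball2 in auto)

lemma h1norm2_bump_pair: "h1norm2 (bump_pair \<alpha> \<beta>) = (\<alpha>\<^sup>2 + \<beta>\<^sup>2) * bump_energy e"
proof -
  let ?k = "\<lambda>c x. (norm (bump_grad c e x))\<^sup>2 + (bump c e x)\<^sup>2"
  have int: "integrable lebesgue (?k c)" for c
    using e_pos
    by (intro integrable_bump_support[where c=c and e=e])
       (auto simp: bump_eq_0 bump_grad_eq_0 intro!: continuous_intros continuous_on_bump continuous_on_bump_grad)
  have energy: "(\<integral>x. ?k c x \<partial>lebesgue) = bump_energy e" for c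
    using integral_bump_translate[of "\<lambda>p. (norm (snd p))\<^sup>2 + (fst p)\<^sup>2" c e]
    by (simp add: bump_energy_def continuous_intros)
  have "h1norm2 (bump_pair \<alpha> \<beta>) =
      (\<integral>x. (norm (\<alpha> *\<^sub>R bump_grad c1 e x + \<beta> *\<^sub>R bump_grad c2 e x))\<^sup>2 + (bump_pair \<alpha> \<beta> x)\<^sup>2 \<partial>lebesgue)"
    by (rule h1norm2_cc1[OF cc1_bump_pair])
  also have "\<dots> = (\<integral>x. \<alpha>\<^sup>2 * ?k c1 x + \<beta>\<^sup>2 * ?k c2 x \<partial>lebesgue)"
  proof (rule Bochner_Integration.integral_cong[OF refl])
    fix x
    show "(norm (\<alpha> *\<^sub>R bump_grad c1 e x + \<beta> *\<^sub>R bump_grad c2 e x))\<^sup>2 + (bump_pair \<alpha> \<beta> x)\<^sup>2 =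
        \<alpha>\<^sup>2 * ?k c1 x + \<beta>\<^sup>2 * ?k c2 x"
      by (rule bumps_separated[of x]) (simp_all add: bump_pair_def power_mult_distrib distrib_left)
  qed
  also have "\<dots> = \<alpha>\<^sup>2 * (\<integral>x. ?k c1 x \<partial>lebesgue) + \<beta>\<^sup>2 * (\<integral>x. ?k c2 x \<partial>lebesgue)"
    using int by simp
  finally show ?thesis unfolding energy by (simp add: algebra_simps)
qed

lemma integral_F_bump_pair:
  assumes "continuous_on UNIV F" "F 0 = 0"
  shows "(\<integral>x. F (bump_pair \<alpha> \<beta> x) \<partial>lebesgue) = bump_potential F e \<alpha> + bump_potential F e \<beta>"
proof -
  have "(\<integral>x. F (bump_pair \<alpha> \<beta> x) \<partial>lebesgue) = (\<integral>x. F (\<alpha> * bump c1 e x) + F (\<beta> * bump c2 e x) \<partial>lebesgue)"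
  proof (rule Bochner_Integration.integral_cong[OF refl])
    fix x
    show "F (bump_pair \<alpha> \<beta> x) = F (\<alpha> * bump c1 e x) + F (\<beta> * bump c2 e x)"
      by (rule bumps_separated[of x]) (simp_all add: bump_pair_def assms(2))
  qed
  also have "\<dots> = bump_potential F e \<alpha> + bump_potential F e \<beta>"
    using assms e_pos by (simp add: integrable_F_bump integral_F_bump)
  finally show ?thesis .
qed

lemma bump_eq_0_outside: "x \<notin> \<Omega>1 \<Longrightarrow> bump c1 e x = 0" "x \<notin> \<Omega>2 \<Longrightarrow> bump c2 e x = 0"
  using cball1 cball2 e_pos ball_subset_cball by (blast intro: bump_eq_0 less_imp_le)+

lemma restr_bump_pair: "restr \<Omega>1 (bump_pair \<alpha> \<beta>) = bump_pair \<alpha> 0" "restr \<Omega>2 (bump_pair \<alpha> \<beta>) = bump_pair 0 \<beta>"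
  using disjoint bump_eq_0_outside by (auto simp: restr_def bump_pair_def fun_eq_iff indicator_def)

lemma nonzero_bump_pair:
  assumes "\<alpha> \<noteq> 0 \<or> \<beta> \<noteq> 0"
  shows "nonzero (bump_pair \<alpha> \<beta>)"
proof -
  have "bump_pair \<alpha> \<beta> x = \<alpha> * bump c1 e x" if "x \<in> ball c1 e" for x
  proof -
    have "x \<notin> \<Omega>2" using that cball1 disjoint ball_subset_cball by blast
    then show ?thesis by (simp add: bump_pair_def bump_eq_0_outside)
  qed
  moreover have "bump_pair \<alpha> \<beta> x = \<beta> * bump c2 e x" if "x \<in> ball c2 e" for x
  proof -
    have "x \<notin> \<Omega>1" using that cball2 disjoint ball_subset_cball by blast
    then show ?thesis by (simp add: bump_pair_def bump_eq_0_outside)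
  qed
  ultimately show ?thesis
    using assms bump_pos e_pos by (metis mult_eq_0_iff nonzero_if_nonzero_on_ball less_irrefl)
qed

lemma bump_pair_in_H10: "bump_pair \<alpha> \<beta> \<in> H10 (\<Omega>1 \<union> \<Omega>2)"
proof -
  let ?g = "\<lambda>x. \<alpha> *\<^sub>R bump_grad c1 e x + \<beta> *\<^sub>R bump_grad c2 e x"
  have u: "cc1 (\<Omega>1 \<union> \<Omega>2) (bump_pair \<alpha> \<beta>) ?g" by (rule cc1_bump_pair)
  have cont: "continuous_on UNIV (bump_pair \<alpha> \<beta>)"
    using u by (intro c1_grad_imp_continuous cc1_imp_c1_grad)
  have "L2 (bump_pair \<alpha> \<beta>)"
    unfolding L2_def using cont
    by (auto intro!: continuous_imp_lebesgue_measurable integrable_cc1[OF u] continuous_intros)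
  \<comment> \<open>in the definition of \<open>H10\<close> take the constant approximating sequence\<close>
  then show ?thesis
    unfolding H10_def using u is_weak_grad_cc1[OF u]
    by (auto intro!: exI[where x="?g"] exI[where x="\<lambda>n. bump_pair \<alpha> \<beta>"] exI[where x="\<lambda>n. ?g"])
qed

end

section \<open>The nonlinearities\<close>

locale kirchhoff_nonlinearity =
  fixes M Mhat f F :: "real \<Rightarrow> real" and m0 \<theta> :: real
  assumes Mhat_0: "Mhat 0 = 0"
    and Mhat_deriv: "\<forall>t\<ge>0. (Mhat has_real_derivative M t) (at t within {0..})"
    and M_nonneg: "\<forall>t\<ge>0. M t \<ge> 0"
    and M_mono: "mono_on {0..} M"
    and M_0: "M 0 = m0" and m0_pos: "m0 > 0"
    and M_div_decreasing: "\<forall>s t. 0 < s \<and> s < t \<longrightarrow> M t / t < M s / s"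
    and F_0: "F 0 = 0"
    and F_deriv: "\<forall>s. (F has_real_derivative f s) (at s)"
    and f_cont: "continuous_on UNIV f"
    and f_o_id_at_0: "((\<lambda>s. f s / s) \<longlongrightarrow> 0) (at 0)"
    and theta_gt_4: "\<theta> > 4"
    and ambrosetti_rabinowitz: "\<forall>s. s \<noteq> 0 \<longrightarrow> 0 < \<theta> * F s \<and> \<theta> * F s \<le> s * f s"
begin

lemma continuous_on_F: "continuous_on UNIV F"
  using F_deriv by (intro continuous_at_imp_continuous_on ballI DERIV_isCont) auto

lemma F_pos:
  assumes "\<sigma> \<noteq> 0"
  shows "F \<sigma> > 0"
proof (rule zero_less_mult_pos)
  show "0 < \<theta> * F \<sigma>" using ambrosetti_rabinowitz assms by auto
qed (use theta_gt_4 in simp)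

lemma F_nonneg: "F \<sigma> \<ge> 0"
  using F_pos[of \<sigma>] F_0 by (cases "\<sigma> = 0") auto

lemma F_le_eps_sq_near_0:
  assumes "\<epsilon> > 0"
  obtains \<delta> where "\<delta> > 0" "\<And>\<sigma>. \<bar>\<sigma>\<bar> \<le> \<delta> \<Longrightarrow> F \<sigma> \<le> \<epsilon> * \<sigma>\<^sup>2"
proof -
  obtain \<delta> where "\<delta> > 0" and \<delta>: "\<And>y. y \<noteq> 0 \<Longrightarrow> \<bar>y\<bar> < \<delta> \<Longrightarrow> \<bar>f y / y\<bar> < \<epsilon>"
    using f_o_id_at_0 assms unfolding tendsto_iff eventually_at by (auto simp: dist_real_def)
  have f_le: "\<bar>f y\<bar> \<le> \<epsilon> * \<bar>y\<bar>" if "\<bar>y\<bar> < \<delta>" for y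
  proof (cases "y = 0")
    case True
    \<comment> \<open>\<open>f 0 = 0\<close> follows from \<open>F 0 = 0\<close> and the Ambrosetti--Rabinowitz condition:
      \<open>F\<close> has a minimum at 0\<close>
    have "f 0 = 0"
      by (rule DERIV_local_min[where f=F and x=0 and d=1]) (use F_deriv F_nonneg F_0 in auto)
    then show ?thesis using True by simp
  next
    case False
    then show ?thesis
      using \<delta>[of y] that by (simp add: abs_divide divide_less_eq less_imp_le)
  qed
  have "F \<sigma> \<le> \<epsilon> * \<sigma>\<^sup>2" if \<sigma>: "\<bar>\<sigma>\<bar> \<le> \<delta> / 2" for \<sigma>
  proof -
    have "\<bar>F \<sigma> - F 0\<bar> \<le> (\<epsilon> * \<bar>\<sigma>\<bar>) * \<bar>\<sigma> - 0\<bar>"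
    proof (rule field_differentiable_bound[where S="{-\<bar>\<sigma>\<bar>..\<bar>\<sigma>\<bar>}", simplified])
      fix t assume t: "- \<bar>\<sigma>\<bar> \<le> t \<and> t \<le> \<bar>\<sigma>\<bar>"
      show "(F has_real_derivative f t) (at t within {-\<bar>\<sigma>\<bar>..\<bar>\<sigma>\<bar>})"
        using F_deriv by (auto intro: has_field_derivative_at_within)
      have "\<bar>f t\<bar> \<le> \<epsilon> * \<bar>t\<bar>" using t \<sigma> \<open>\<delta> > 0\<close> by (intro f_le) auto
      also have "\<dots> \<le> \<epsilon> * \<bar>\<sigma>\<bar>" using t assms by (intro mult_left_mono) auto
      finally show "\<bar>f t\<bar> \<le> \<epsilon> * \<bar>\<sigma>\<bar>" .
    qed auto
    then show ?thesis by (simp add: F_0 power2_eq_square abs_mult_self_eq mult.assoc)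
  qed
  then show ?thesis using \<open>\<delta> > 0\<close> by (intro that[of "\<delta> / 2"]) auto
qed

text \<open>Integrating \<open>\<theta> / t \<le> f t / F t\<close> gives the superquartic growth of \<open>F\<close>.\<close>
lemma F_ge_powr:
  assumes \<sigma>: "\<sigma> \<ge> 1"
  shows "F 1 * \<sigma> powr \<theta> \<le> F \<sigma>"
proof -
  define q where "q t = ln (F t) - \<theta> * ln t" for t
  have F_pos': "F t > 0" if "t \<ge> 1" for t using F_pos that by auto
  have "q 1 \<le> q \<sigma>"
  proof (rule DERIV_nonneg_imp_increasing_open[OF \<sigma>])
    fix t assume t: "1 < t" "t < \<sigma>"
    have "DERIV q t :> f t / F t - \<theta> * (1 / t)"
      unfolding q_def[abs_def] using F_pos'[of t] t F_deriv
      by (auto intro!: derivative_eq_intros)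
    moreover have "\<theta> / t \<le> f t / F t"
      using ambrosetti_rabinowitz F_pos'[of t] t by (simp add: field_simps)
    ultimately show "\<exists>y. DERIV q t :> y \<and> y \<ge> 0" by auto
  next
    have "continuous_on {1..\<sigma>} F" by (rule continuous_on_subset[OF continuous_on_F]) auto
    then have lnF: "continuous_on {1..\<sigma>} (\<lambda>t. ln (F t))"
      by (rule continuous_on_ln) (use F_pos' in \<open>auto simp: less_le\<close>)
    have ln: "continuous_on {1..\<sigma>} (\<lambda>t. ln t)"
      by (rule continuous_on_ln[OF continuous_on_id]) auto
    show "continuous_on {1..\<sigma>} q"
      unfolding q_def by (intro continuous_intros lnF ln)
  qed
  then have "ln (F 1) + \<theta> * ln \<sigma> \<le> ln (F \<sigma>)" by (simp add: q_def)
  then have "exp (ln (F 1) + \<theta> * ln \<sigma>) \<le> F \<sigma>"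
    using F_pos'[OF \<sigma>] by (simp add: ln_ge_iff)
  then show ?thesis using F_pos'[of 1] \<sigma> by (simp add: exp_add powr_def mult.commute)
qed

lemma Mhat_deriv_at:
  assumes "N > 0"
  shows "(Mhat has_real_derivative M N) (at N)"
proof -
  have "at N within {0..} = at N" using assms by (intro at_within_interior) auto
  then show ?thesis using Mhat_deriv assms by (metis less_imp_le)
qed

lemma continuous_on_Mhat: "continuous_on {0..} Mhat"
  unfolding continuous_on_eq_continuous_within using Mhat_deriv by (auto intro: DERIV_continuous)

lemma Mhat_mean_value:
  assumes "N > 0"
  obtains z where "0 < z" "z < N" "Mhat N = N * M z"
proof -
  have "continuous_on {0..N} Mhat" by (rule continuous_on_subset[OF continuous_on_Mhat]) auto
  moreover have "Mhat differentiable (at x)" if "0 < x" "x < N" for x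
    using Mhat_deriv_at[OF that(1)] by (auto simp: real_differentiable_def)
  ultimately obtain l z where z: "0 < z" "z < N" "DERIV Mhat z :> l" "Mhat N - Mhat 0 = (N - 0) * l"
    using MVT[OF assms] by blast
  have "l = M z" using z(3) Mhat_deriv_at[OF z(1)] by (rule DERIV_unique)
  with z show ?thesis using Mhat_0 that by simp
qed

lemma Mhat_ge: "N \<ge> 0 \<Longrightarrow> m0 * N \<le> Mhat N"
proof (cases "N = 0")
  case False
  assume "N \<ge> 0"
  with False have "N > 0" by simp
  then obtain z where z: "0 < z" "z < N" "Mhat N = N * M z"
    by (rule Mhat_mean_value)
  then have "M 0 \<le> M z" using M_mono by (auto simp: mono_on_def)
  then show ?thesis using z M_0 by (simp add: mult.commute mult_left_mono)
qed (simp add: Mhat_0)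

text \<open>Since \<open>M t / t\<close> decreases, \<open>M\<close> grows at most linearly, so \<open>Mhat\<close> at most quadratically.\<close>
lemma M_le: "z \<ge> 0 \<Longrightarrow> M z \<le> M 1 * (1 + z)"
proof (cases "z \<le> 1")
  case True
  assume "z \<ge> 0"
  then have "M z \<le> M 1" using True M_mono by (auto simp: mono_on_def)
  also have "\<dots> \<le> M 1 * (1 + z)"
    using M_nonneg \<open>z \<ge> 0\<close> mult_left_mono[of 1 "1 + z" "M 1"] by simp
  finally show ?thesis .
next
  case False
  then have "M z < M 1 * z" using M_div_decreasing[rule_format, of 1 z] by (simp add: divide_less_eq)
  then show ?thesis using M_nonneg[rule_format, of 1] by (simp add: algebra_simps)
qed

lemma Mhat_le: "N \<ge> 0 \<Longrightarrow> Mhat N \<le> M 1 * (1 + N) * N"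
proof (cases "N = 0")
  case False
  assume "N \<ge> 0"
  with False have "N > 0" by simp
  then obtain z where z: "0 < z" "z < N" "Mhat N = N * M z"
    by (rule Mhat_mean_value)
  have "M z \<le> M 1 * (1 + z)" using z by (intro M_le) auto
  also have "\<dots> \<le> M 1 * (1 + N)" using z M_nonneg by (intro mult_left_mono) auto
  finally have "M z \<le> M 1 * (1 + N)" .
  then show ?thesis using z by (simp add: mult.commute mult_left_mono)
qed (simp add: Mhat_0)

end

section \<open>The fibering map along the diagonal\<close>

locale kirchhoff_two_bumps = two_bumps + kirchhoff_nonlinearity
begin

lemma Jfun_bump_pair:
  "Jfun Mhat F (bump_pair \<alpha> \<beta>) = Mhat ((\<alpha>\<^sup>2 + \<beta>\<^sup>2) * bump_energy e) / 2
     - (bump_potential F e \<alpha> + bump_potential F e \<beta>)"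
  by (simp add: Jfun_def h1norm2_bump_pair integral_F_bump_pair continuous_on_F F_0)

lemma bump_potential_deriv_at:
  "(bump_potential F e has_real_derivative bump_potential_deriv f e r) (at r)"
  using F_deriv F_0 f_cont e_pos by (intro bump_potential_has_derivative) auto

lemma bump_potential_small:
  assumes "\<epsilon> > 0"
  obtains s where "s > 0" "bump_potential F e s \<le> \<epsilon> * s\<^sup>2 * bump_energy e"
proof -
  obtain \<delta> where "\<delta> > 0" and \<delta>: "\<And>\<sigma>. \<bar>\<sigma>\<bar> \<le> \<delta> \<Longrightarrow> F \<sigma> \<le> \<epsilon> * \<sigma>\<^sup>2"
    using F_le_eps_sq_near_0[OF assms] by blast
  define s where "s = \<delta> / e ^ 4"
  have "s > 0" using \<open>\<delta> > 0\<close> e_pos by (simp add: s_def)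
  have sq_int: "integrable lebesgue (\<lambda>x. (bump 0 e x)\<^sup>2)"
    using e_pos by (intro integrable_bump_support[where c=0 and e=e])
      (auto simp: bump_eq_0 intro!: continuous_intros continuous_on_bump)
  have "bump_potential F e s \<le> (\<integral>x. \<epsilon> * s\<^sup>2 * (bump 0 e x)\<^sup>2 \<partial>lebesgue)"
    unfolding bump_potential_def
  proof (rule integral_mono)
    show "integrable lebesgue (\<lambda>x. F (s * bump 0 e x))"
      using continuous_on_F F_0 e_pos by (intro integrable_F_bump) auto
    show "integrable lebesgue (\<lambda>x. \<epsilon> * s\<^sup>2 * (bump 0 e x)\<^sup>2)" using sq_int by simp
    fix x
    have "\<bar>s * bump 0 e x\<bar> \<le> s * e ^ 4"
      using \<open>s > 0\<close> bump_nonneg bump_le by (simp add: abs_mult mult_left_mono)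
    also have "\<dots> = \<delta>" using e_pos by (simp add: s_def)
    finally show "F (s * bump 0 e x) \<le> \<epsilon> * s\<^sup>2 * (bump 0 e x)\<^sup>2"
      using \<delta>[of "s * bump 0 e x"] by (simp add: power_mult_distrib mult.assoc)
  qed
  also have "\<dots> = \<epsilon> * s\<^sup>2 * (\<integral>x. (bump 0 e x)\<^sup>2 \<partial>lebesgue)" by simp
  also have "\<dots> \<le> \<epsilon> * s\<^sup>2 * bump_energy e"
    unfolding bump_energy_def using assms
    by (intro mult_left_mono integral_mono sq_int integrable_bump_support[where c=0 and e=e])
       (use e_pos in \<open>auto simp: bump_eq_0 bump_grad_eq_0 intro!: continuous_intros continuous_on_bump continuous_on_bump_grad\<close>)
  finally show ?thesis using \<open>s > 0\<close> that by blast
qed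

lemma bump_potential_large:
  obtains c R0 where "c > 0" "R0 \<ge> 1" "\<And>R. R \<ge> R0 \<Longrightarrow> c * R powr \<theta> \<le> bump_potential F e R"
proof -
  define b where "b = (3 * e\<^sup>2 / 4)\<^sup>2"
  define \<mu> where "\<mu> = measure lebesgue (ball (0::R3) (e/2))"
  have "b > 0" "\<mu> > 0" "F 1 > 0"
    using e_pos content_ball_pos[of "e/2" "0::R3"] F_pos[of 1] by (simp_all add: b_def \<mu>_def)
  have "F 1 * b powr \<theta> * \<mu> * R powr \<theta> \<le> bump_potential F e R" if R: "R \<ge> max 1 (1 / b)" for R
  proof -
    have "F 1 * (R * b) powr \<theta> * \<mu> \<le> bump_potential F e R"
      unfolding bump_potential_def \<mu>_def
    proof (rule integral_lebesgue_ge_on_set)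
      show "integrable lebesgue (\<lambda>x. F (R * bump 0 e x))"
        using continuous_on_F F_0 e_pos by (intro integrable_F_bump) auto
      fix x :: R3 assume x: "x \<in> ball 0 (e/2)"
      have "R * b \<le> R * bump 0 e x"
        using bump_ge_on_half_ball[OF x] R by (simp add: b_def mult_left_mono)
      moreover have "1 \<le> R * b" using R \<open>b > 0\<close> by (simp add: field_simps)
      ultimately show "F 1 * (R * b) powr \<theta> \<le> F (R * bump 0 e x)"
        using F_ge_powr[of "R * bump 0 e x"] \<open>F 1 > 0\<close> theta_gt_4
        by (smt (verit) mult_left_mono powr_mono2)
    qed (use F_nonneg \<open>F 1 > 0\<close> in simp_all)
    then show ?thesis using R \<open>b > 0\<close> by (simp add: powr_mult algebra_simps)
  qed
  then show ?thesis
    using \<open>b > 0\<close> \<open>\<mu> > 0\<close> \<open>F 1 > 0\<close> by (intro that[of "F 1 * b powr \<theta> * \<mu>" "max 1 (1 / b)"]) auto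
qed

lemma Mhat_diagonal_le: "R \<ge> 1 \<Longrightarrow> Mhat (2 * bump_energy e * R\<^sup>2) \<le> M 1 * (1 + 2 * bump_energy e) * (2 * bump_energy e) * R ^ 4"
proof -
  assume R: "R \<ge> 1"
  let ?A = "bump_energy e"
  have A: "?A > 0" by (rule bump_energy_pos[OF e_pos])
  have "Mhat (2 * ?A * R\<^sup>2) \<le> M 1 * (1 + 2 * ?A * R\<^sup>2) * (2 * ?A * R\<^sup>2)"
    using A by (intro Mhat_le) simp
  also have "\<dots> \<le> M 1 * ((1 + 2 * ?A) * R\<^sup>2) * (2 * ?A * R\<^sup>2)"
    using R A M_nonneg one_le_power[of R 2]
    by (intro mult_right_mono mult_left_mono) (auto simp: algebra_simps)
  finally show ?thesis by (simp add: power2_eq_square power4_eq_xxxx algebra_simps)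
qed

text \<open>Half the energy along the diagonal: \<open>diagonal_fiber s = Jfun Mhat F (bump_pair s s) / 2\<close>.\<close>
definition diagonal_fiber :: "real \<Rightarrow> real" where
  "diagonal_fiber s = Mhat (2 * bump_energy e * s\<^sup>2) / 4 - bump_potential F e s"

lemma diagonal_fiber_pos_near_0: "\<exists>s>0. diagonal_fiber s > 0"
proof -
  let ?A = "bump_energy e"
  obtain s where s: "s > 0" "bump_potential F e s \<le> m0 / 4 * s\<^sup>2 * ?A"
    using bump_potential_small[of "m0 / 4"] m0_pos by auto
  have "m0 * (2 * ?A * s\<^sup>2) \<le> Mhat (2 * ?A * s\<^sup>2)"
    using bump_energy_pos[OF e_pos] by (intro Mhat_ge) simp
  then have "m0 * ?A * s\<^sup>2 / 4 \<le> diagonal_fiber s"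
    using s(2) by (simp add: diagonal_fiber_def field_simps)
  moreover have "m0 * ?A * s\<^sup>2 / 4 > 0" using m0_pos bump_energy_pos[OF e_pos] s(1) by simp
  ultimately show ?thesis using s(1) by force
qed

text \<open>Superquartic growth of the potential beats the at most quartic growth of \<open>Mhat\<close>.\<close>
lemma diagonal_fiber_neg_far: "\<exists>R>s0. diagonal_fiber R < 0"
proof -
  obtain c R0 where c: "c > 0" "R0 \<ge> 1" and pot: "\<And>R. R \<ge> R0 \<Longrightarrow> c * R powr \<theta> \<le> bump_potential F e R"
    using bump_potential_large by blast
  define C where "C = M 1 * (1 + 2 * bump_energy e) * (2 * bump_energy e) / 4"
  define R where "R = max (max s0 R0) ((C / c + 1) powr (1 / (\<theta> - 4))) + 1"
  have R: "R > s0" "R \<ge> R0" "R \<ge> 1" using c by (auto simp: R_def)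
  have "C \<ge> 0" using M_nonneg bump_energy_pos[OF e_pos] by (simp add: C_def)
  have "C / c + 1 = ((C / c + 1) powr (1 / (\<theta> - 4))) powr (\<theta> - 4)"
    using theta_gt_4 c \<open>C \<ge> 0\<close> by (simp add: powr_powr)
  also have "\<dots> \<le> R powr (\<theta> - 4)"
    using theta_gt_4 by (intro powr_mono2) (auto simp: R_def)
  finally have "C / c + 1 \<le> R powr (\<theta> - 4)" .
  then have "C + c \<le> c * R powr (\<theta> - 4)"
    using c by (simp add: field_simps)
  then have "R ^ 4 * (C + c) \<le> R ^ 4 * (c * R powr (\<theta> - 4))"
    using R by (intro mult_left_mono) auto
  also have "\<dots> = c * (R ^ 4 * R powr (\<theta> - 4))" by simp
  also have "R ^ 4 * R powr (\<theta> - 4) = R powr \<theta>"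
  proof -
    have "R powr \<theta> = R powr 4 * R powr (\<theta> - 4)" by (simp flip: powr_add)
    then show ?thesis using R powr_realpow[of R 4] by simp
  qed
  also have "c * R powr \<theta> \<le> bump_potential F e R" using pot R by simp
  finally have "R ^ 4 * (C + c) \<le> bump_potential F e R" by simp
  moreover have "Mhat (2 * bump_energy e * R\<^sup>2) / 4 \<le> C * R ^ 4"
    using Mhat_diagonal_le[OF R(3)] by (simp add: C_def algebra_simps)
  ultimately have "diagonal_fiber R \<le> - c * R ^ 4"
    by (simp add: diagonal_fiber_def algebra_simps)
  also have "\<dots> < 0" using c R by simp
  finally show ?thesis using R by blast
qed

lemma diagonal_fiber_deriv:
  assumes "s > 0"
  shows "(diagonal_fiber has_real_derivative
           M (2 * bump_energy e * s\<^sup>2) * bump_energy e * s - bump_potential_deriv f e s) (at s)"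
proof -
  have N: "2 * bump_energy e * s\<^sup>2 > 0" using assms bump_energy_pos[OF e_pos] by simp
  have "((\<lambda>s. 2 * bump_energy e * s\<^sup>2) has_real_derivative 2 * bump_energy e * (2 * s)) (at s)"
    by (auto intro!: derivative_eq_intros)
  from DERIV_diff[OF DERIV_cdivide[OF DERIV_chain2[OF Mhat_deriv_at[OF N] this], of 4] bump_potential_deriv_at]
  show ?thesis
    unfolding diagonal_fiber_def[abs_def] by (simp add: algebra_simps)
qed

text \<open>An interior maximum of the fiber on \<open>[0, R]\<close> is a critical point.\<close>
lemma diagonal_fiber_critical_point:
  "\<exists>s>0. M (2 * bump_energy e * s\<^sup>2) * bump_energy e * s = bump_potential_deriv f e s"
proof -
  obtain s0 where s0: "s0 > 0" "diagonal_fiber s0 > 0" using diagonal_fiber_pos_near_0 by blast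
  obtain R where R: "R > s0" "diagonal_fiber R < 0" using diagonal_fiber_neg_far by blast
  have "continuous_on {0..R} (\<lambda>s. Mhat (2 * bump_energy e * s\<^sup>2))"
    using bump_energy_pos[OF e_pos]
    by (intro continuous_on_compose2[OF continuous_on_Mhat] continuous_intros) auto
  moreover have "continuous_on {0..R} (bump_potential F e)"
    using bump_potential_deriv_at
    by (intro continuous_at_imp_continuous_on ballI DERIV_isCont) auto
  ultimately have "continuous_on {0..R} diagonal_fiber"
    unfolding diagonal_fiber_def[abs_def] by (intro continuous_intros) auto
  then obtain s where s: "s \<in> {0..R}" "\<And>y. y \<in> {0..R} \<Longrightarrow> diagonal_fiber y \<le> diagonal_fiber s"
    using continuous_attains_sup[of "{0..R}" diagonal_fiber] R s0 by auto
  have "diagonal_fiber 0 = 0" by (simp add: diagonal_fiber_def Mhat_0 bump_potential_def F_0)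
  then have "0 < s" "s < R" using s s0 R by (smt (verit) atLeastAtMost_iff)+
  have "M (2 * bump_energy e * s\<^sup>2) * bump_energy e * s - bump_potential_deriv f e s = 0"
  proof (rule DERIV_local_max[OF diagonal_fiber_deriv[OF \<open>0 < s\<close>]])
    show "0 < min s (R - s)" using \<open>0 < s\<close> \<open>s < R\<close> by simp
    show "\<forall>y. \<bar>s - y\<bar> < min s (R - s) \<longrightarrow> diagonal_fiber y \<le> diagonal_fiber s"
      using s(2) by (auto simp: abs_less_iff)
  qed
  then show ?thesis using \<open>0 < s\<close> by auto
qed

lemma derivative_Jfun_diagonal:
  assumes "s > 0"
  shows "((\<lambda>t. Jfun Mhat F (\<lambda>x. bump_pair s s x + t * bump_pair \<gamma> \<delta> x)) has_real_derivative
           (\<gamma> + \<delta>) * (M (2 * bump_energy e * s\<^sup>2) * bump_energy e * s - bump_potential_deriv f e s)) (at 0)"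
proof -
  let ?A = "bump_energy e" and ?\<Phi> = "bump_potential F e" and ?\<Phi>' = "bump_potential_deriv f e"
  have N: "((s + 0 * \<gamma>)\<^sup>2 + (s + 0 * \<delta>)\<^sup>2) * ?A > 0" using assms bump_energy_pos[OF e_pos] by simp
  have d1: "((\<lambda>t. ((s + t * \<gamma>)\<^sup>2 + (s + t * \<delta>)\<^sup>2) * ?A) has_real_derivative
              (2 * (s + 0 * \<gamma>) * \<gamma> + 2 * (s + 0 * \<delta>) * \<delta>) * ?A) (at 0)"
    by (auto intro!: derivative_eq_intros simp: algebra_simps)
  have d2: "((\<lambda>t. s + t * \<gamma>) has_real_derivative \<gamma>) (at 0)"
    and d3: "((\<lambda>t. s + t * \<delta>) has_real_derivative \<delta>) (at 0)"
    by (auto intro!: derivative_eq_intros)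
  have "((\<lambda>t. Mhat (((s + t * \<gamma>)\<^sup>2 + (s + t * \<delta>)\<^sup>2) * ?A) / 2 - (?\<Phi> (s + t * \<gamma>) + ?\<Phi> (s + t * \<delta>)))
        has_real_derivative
        M (((s + 0 * \<gamma>)\<^sup>2 + (s + 0 * \<delta>)\<^sup>2) * ?A) * ((2 * (s + 0 * \<gamma>) * \<gamma> + 2 * (s + 0 * \<delta>) * \<delta>) * ?A) / 2
          - (?\<Phi>' (s + 0 * \<gamma>) * \<gamma> + ?\<Phi>' (s + 0 * \<delta>) * \<delta>)) (at 0)"
    by (intro DERIV_diff DERIV_cdivide DERIV_add DERIV_chain2[OF Mhat_deriv_at[OF N] d1]
        DERIV_chain2[OF bump_potential_deriv_at d2] DERIV_chain2[OF bump_potential_deriv_at d3])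
  moreover have "M (((s + 0 * \<gamma>)\<^sup>2 + (s + 0 * \<delta>)\<^sup>2) * ?A) * ((2 * (s + 0 * \<gamma>) * \<gamma> + 2 * (s + 0 * \<delta>) * \<delta>) * ?A) / 2
          - (?\<Phi>' (s + 0 * \<gamma>) * \<gamma> + ?\<Phi>' (s + 0 * \<delta>) * \<delta>)
      = (\<gamma> + \<delta>) * (M (2 * ?A * s\<^sup>2) * ?A * s - ?\<Phi>' s)"
    by (simp add: power2_eq_square algebra_simps)
  ultimately show ?thesis
    by (simp add: bump_pair_add_scaled Jfun_bump_pair)
qed

lemma Mset_nonempty: "Mset \<Omega>1 \<Omega>2 Mhat F \<noteq> {}"
proof -
  obtain s where "s > 0" and crit: "M (2 * bump_energy e * s\<^sup>2) * bump_energy e * s = bump_potential_deriv f e s"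
    using diagonal_fiber_critical_point by blast
  then have "dJ_zero Mhat F (bump_pair s s) (bump_pair \<gamma> \<delta>)" for \<gamma> \<delta>
    using derivative_Jfun_diagonal[of s \<gamma> \<delta>] by (simp add: dJ_zero_def)
  then have "bump_pair s s \<in> Mset \<Omega>1 \<Omega>2 Mhat F"
    using \<open>s > 0\<close> bump_pair_in_H10 nonzero_bump_pair
    by (simp add: Mset_def nehari_def restr_bump_pair)
  then show ?thesis by blast
qed

end

theorem corollary2p2:
  fixes \<Omega>1 \<Omega>2 :: "(real^3) set"
    and M Mhat M' :: "real \<Rightarrow> real"
    and f F :: "real \<Rightarrow> real"
    and m0 \<theta> :: real
  assumes open1: "open \<Omega>1" and open2: "open \<Omega>2"
    and bdd1: "bounded \<Omega>1" and bdd2: "bounded \<Omega>2"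
    and disj: "\<Omega>1 \<inter> \<Omega>2 = {}"
    and dist_pos: "setdist \<Omega>1 \<Omega>2 > 0"
    and M_nonneg: "\<forall>t\<ge>0. M t \<ge> 0"
    and M_C1: "continuous_on {0..} M'"
    and M_deriv: "\<forall>t\<ge>0. (M has_real_derivative M' t) (at t within {0..})"
    and M1_mono: "mono_on {0..} M"
    and M1_0: "M 0 = m0" and m0_pos: "m0 > 0"
    and M2: "\<forall>s t. 0 < s \<and> s < t \<longrightarrow> M t / t < M s / s"
    and Mhat_0: "Mhat 0 = 0"
    and Mhat_deriv: "\<forall>t\<ge>0. (Mhat has_real_derivative M t) (at t within {0..})"
    and f_cont: "continuous_on UNIV f"
    and F_0: "F 0 = 0"
    and F_deriv: "\<forall>s. (F has_real_derivative f s) (at s)"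
    and f1: "((\<lambda>s. f s / s) \<longlongrightarrow> 0) (at 0)"
    and f2: "((\<lambda>s. f s / s ^ 5) \<longlongrightarrow> 0) at_infinity"
    and f3: "\<theta> > 4" "\<forall>s. s \<noteq> 0 \<longrightarrow> 0 < \<theta> * F s \<and> \<theta> * F s \<le> s * f s"
    and f4_pos: "\<forall>s t. 0 < s \<and> s < t \<longrightarrow> f s / s ^ 3 < f t / t ^ 3"
    and f4_neg: "\<forall>s t. s < t \<and> t < 0 \<longrightarrow> f t / t ^ 3 < f s / s ^ 3"
  shows "Mset \<Omega>1 \<Omega>2 Mhat F \<noteq> {}"
proof -
  have "\<Omega>1 \<noteq> {}" "\<Omega>2 \<noteq> {}"
    using dist_pos by (auto simp: setdist_empty1 setdist_empty2)
  then obtain c1 c2 where "c1 \<in> \<Omega>1" "c2 \<in> \<Omega>2" by blast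
  then obtain e1 e2 where "e1 > 0" "ball c1 e1 \<subseteq> \<Omega>1" "e2 > 0" "ball c2 e2 \<subseteq> \<Omega>2"
    using open1 open2 by (meson openE)
  then have "cball c1 (min e1 e2 / 2) \<subseteq> \<Omega>1" "cball c2 (min e1 e2 / 2) \<subseteq> \<Omega>2" "min e1 e2 / 2 > 0"
    by (auto simp: subset_iff)
  then interpret kirchhoff_two_bumps \<Omega>1 \<Omega>2 c1 c2 "min e1 e2 / 2" M Mhat f F m0 \<theta>
    using disj Mhat_0 Mhat_deriv M_nonneg M1_mono M1_0 m0_pos M2 F_0 F_deriv f_cont f1 f3
    by unfold_locales auto
  show ?thesis by (rule Mset_nonempty)
qed

end
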